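(* Let $B\wr\mathcal{H}(d)$ be a quantum wreath product as in the context, and suppose $B$ has an algebra anti-automorphism $b\mapsto b^*$; extend it factorwise to $B^{\otimes k}$. Let $A$ be the free associative $K$-algebra generated by $B^{\otimes d}$ and symbols $H_1,\dots,H_{d-1}$, and let $*:A\to B\wr\mathcal{H}(d)$ be the algebra anti-homomorphism with $b_1\otimes\cdots\otimes b_d\mapsto b_1^*\otimes\cdots\otimes b_d^*$ and $H_i\mapsto H_i$. Then $*$ induces an anti-homomorphism $B\wr\mathcal{H}(d)\to B\wr\mathcal{H}(d)$ if and only if (1) $\sigma(S^* )=S$ and $\rho(S^* )+R^*=R$; (2) for all $b\in B\otimes B$: $\sigma(\sigma(b)^* )=b^*$ and $\rho(\sigma(b)^* )+\rho(b)^*=0$. In this case $*$ is an anti-automorphism of $B\wr\mathcal{H}(d)$.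
   Context: Let $K$ be a commutative ring and $B$ a unital associative $K$-algebra, free over $K$; tensor products over $K$. Fix $d\ge2$, $S,R\in B\otimes B$ and $K$-linear maps $\sigma,\rho:B\otimes B\to B\otimes B$. For $Z\in B\otimes B$, $Z_i:=1^{\otimes(i-1)}\otimes Z\otimes1^{\otimes(d-i-1)}\in B^{\otimes d}$; for $\phi\in\mathrm{End}_K(B\otimes B)$, $\phi_i$ is $\phi$ applied to tensor factors $i,i+1$ of $B^{\otimes d}$. The quantum wreath product $B\wr\mathcal{H}(d)$ is the unital $K$-algebra generated by the algebra $B^{\otimes d}$ and $H_1,\dots,H_{d-1}$ subject to $H_kH_{k+1}H_k=H_{k+1}H_kH_{k+1}$, $H_iH_j=H_jH_i$ ($|i-j|\ge2$), $H_i^2=S_iH_i+R_i$, $H_ib=\sigma_i(b)H_i+\rho_i(b)$ ($b\in B^{\otimes d}$). With $H_w$ defined via reduced expressions of $w\in\Sigma_d$, it is assumed that $B\wr\mathcal{H}(d)$ has a PBW basis $\{(b_{j_1}\otimes\cdots\otimes b_{j_d})H_w\}$ for a $K$-basis $\{b_j\}$ of $B$. *)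

theory Defs
  imports "HOL-Library.Poly_Mapping" "HOL-Combinatorics.Transposition" "HOL-Combinatorics.Permutations"
begin

text \<open>The algebra B,
  free over K with basis indexed by the type 'j, is represented by its coordinate space
  'j =>0 'k (finitely supported coefficient functions); its multiplication mulB and unit oneB
  are arbitrary data satisfying the K-algebra axioms.  Tensor powers of B are represented in
  coordinates w.r.t. the tensor basis: an element of B tensor-power n is an element of
  'j list =>0 'k all of whose support lists have length n (tens_space n).\<close>

definition pscale :: "'k::comm_ring_1 \<Rightarrow> ('a \<Rightarrow>\<^sub>0 'k) \<Rightarrow> ('a \<Rightarrow>\<^sub>0 'k)" where
  "pscale c x = Poly_Mapping.map (\<lambda>v. c * v) x"

definition lin_ext :: "('a \<Rightarrow> ('b \<Rightarrow>\<^sub>0 'k::comm_ring_1)) \<Rightarrow> ('a \<Rightarrow>\<^sub>0 'k) \<Rightarrow> ('b \<Rightarrow>\<^sub>0 'k)" where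
  "lin_ext f x = (\<Sum>a\<in>Poly_Mapping.keys x. pscale (Poly_Mapping.lookup x a) (f a))"

definition tens_space :: "nat \<Rightarrow> ('j list \<Rightarrow>\<^sub>0 'k::zero) set" where
  "tens_space n = {x. \<forall>a\<in>Poly_Mapping.keys x. length a = n}"

definition tprod :: "('j list \<Rightarrow>\<^sub>0 'k::comm_ring_1) \<Rightarrow> ('j list \<Rightarrow>\<^sub>0 'k) \<Rightarrow> ('j list \<Rightarrow>\<^sub>0 'k)" where
  "tprod x y = (\<Sum>a\<in>Poly_Mapping.keys x. \<Sum>b\<in>Poly_Mapping.keys y. Poly_Mapping.single (a @ b) (Poly_Mapping.lookup x a * Poly_Mapping.lookup y b))"

definition lift1 :: "('j \<Rightarrow>\<^sub>0 'k::comm_ring_1) \<Rightarrow> ('j list \<Rightarrow>\<^sub>0 'k)" where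
  "lift1 b = (\<Sum>j\<in>Poly_Mapping.keys b. Poly_Mapping.single [j] (Poly_Mapping.lookup b j))"

definition pure :: "('j \<Rightarrow>\<^sub>0 'k::comm_ring_1) list \<Rightarrow> ('j list \<Rightarrow>\<^sub>0 'k)" where
  "pure bs = foldr (\<lambda>b t. tprod (lift1 b) t) bs (Poly_Mapping.single [] 1)"

definition ebasis :: "'a \<Rightarrow> ('a \<Rightarrow>\<^sub>0 'k::comm_ring_1)" where
  "ebasis a = Poly_Mapping.single a 1"

definition mulT :: "(('j \<Rightarrow>\<^sub>0 'k) \<Rightarrow> ('j \<Rightarrow>\<^sub>0 'k) \<Rightarrow> ('j \<Rightarrow>\<^sub>0 'k::comm_ring_1))
    \<Rightarrow> ('j list \<Rightarrow>\<^sub>0 'k) \<Rightarrow> ('j list \<Rightarrow>\<^sub>0 'k) \<Rightarrow> ('j list \<Rightarrow>\<^sub>0 'k)" where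
  "mulT mulB x y = (\<Sum>a\<in>Poly_Mapping.keys x. \<Sum>b\<in>Poly_Mapping.keys y. pscale (Poly_Mapping.lookup x a * Poly_Mapping.lookup y b)
      (if length a = length b then pure (map2 (\<lambda>i j. mulB (ebasis i) (ebasis j)) a b) else 0))"

definition oneT :: "('j \<Rightarrow>\<^sub>0 'k::comm_ring_1) \<Rightarrow> nat \<Rightarrow> ('j list \<Rightarrow>\<^sub>0 'k)" where
  "oneT oneB n = pure (replicate n oneB)"

definition starT :: "(('j \<Rightarrow>\<^sub>0 'k) \<Rightarrow> ('j \<Rightarrow>\<^sub>0 'k::comm_ring_1)) \<Rightarrow> ('j list \<Rightarrow>\<^sub>0 'k) \<Rightarrow> ('j list \<Rightarrow>\<^sub>0 'k)" where
  "starT starB x = lin_ext (\<lambda>a. pure (map (\<lambda>j. starB (ebasis j)) a)) x"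

text \<open>Z_i = 1^(i-1) (x) Z (x) 1^(d-i-1) in B^(x)d (1-based i).\<close>
definition emb :: "('j \<Rightarrow>\<^sub>0 'k::comm_ring_1) \<Rightarrow> nat \<Rightarrow> nat \<Rightarrow> ('j list \<Rightarrow>\<^sub>0 'k) \<Rightarrow> ('j list \<Rightarrow>\<^sub>0 'k)" where
  "emb oneB d i Z = tprod (pure (replicate (i - 1) oneB)) (tprod Z (pure (replicate (d - i - 1) oneB)))"

text \<open>phi_i: phi applied to tensor factors i, i+1 (1-based) of B^(x)d, extended K-linearly.\<close>
definition loc :: "nat \<Rightarrow> (('j list \<Rightarrow>\<^sub>0 'k) \<Rightarrow> ('j list \<Rightarrow>\<^sub>0 'k::comm_ring_1))
    \<Rightarrow> ('j list \<Rightarrow>\<^sub>0 'k) \<Rightarrow> ('j list \<Rightarrow>\<^sub>0 'k)" where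
  "loc i \<phi> x = lin_ext (\<lambda>a. tprod (ebasis (take (i - 1) a))
       (tprod (\<phi> (ebasis [a ! (i - 1), a ! i])) (ebasis (drop (i + 1) a)))) x"

definition lin_on :: "('a \<Rightarrow>\<^sub>0 'k::comm_ring_1) set \<Rightarrow> (('a \<Rightarrow>\<^sub>0 'k) \<Rightarrow> ('b \<Rightarrow>\<^sub>0 'k)) \<Rightarrow> bool" where
  "lin_on A f \<longleftrightarrow> (\<forall>x\<in>A. \<forall>y\<in>A. f (x + y) = f x + f y) \<and> (\<forall>c. \<forall>x\<in>A. f (pscale c x) = pscale c (f x))"

definition K_algebra_B :: "(('j \<Rightarrow>\<^sub>0 'k) \<Rightarrow> ('j \<Rightarrow>\<^sub>0 'k) \<Rightarrow> ('j \<Rightarrow>\<^sub>0 'k::comm_ring_1)) \<Rightarrow> ('j \<Rightarrow>\<^sub>0 'k) \<Rightarrow> bool" where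
  "K_algebra_B mulB oneB \<longleftrightarrow>
     (\<forall>x y z. mulB (mulB x y) z = mulB x (mulB y z)) \<and>
     (\<forall>x. mulB oneB x = x \<and> mulB x oneB = x) \<and>
     (\<forall>x y z. mulB (x + y) z = mulB x z + mulB y z \<and> mulB x (y + z) = mulB x y + mulB x z) \<and>
     (\<forall>c x y. mulB (pscale c x) y = pscale c (mulB x y) \<and> mulB x (pscale c y) = pscale c (mulB x y))"

definition anti_automorphism_B :: "(('j \<Rightarrow>\<^sub>0 'k) \<Rightarrow> ('j \<Rightarrow>\<^sub>0 'k) \<Rightarrow> ('j \<Rightarrow>\<^sub>0 'k::comm_ring_1)) \<Rightarrow> ('j \<Rightarrow>\<^sub>0 'k)
    \<Rightarrow> (('j \<Rightarrow>\<^sub>0 'k) \<Rightarrow> ('j \<Rightarrow>\<^sub>0 'k)) \<Rightarrow> bool" where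
  "anti_automorphism_B mulB oneB starB \<longleftrightarrow>
     lin_on UNIV starB \<and> bij starB \<and> starB oneB = oneB \<and>
     (\<forall>x y. starB (mulB x y) = mulB (starB y) (starB x))"

definition K_algebra_W :: "('k::comm_ring_1 \<Rightarrow> 'w::ring_1 \<Rightarrow> 'w) \<Rightarrow> bool" where
  "K_algebra_W smul \<longleftrightarrow>
     (\<forall>c x y. smul c (x + y) = smul c x + smul c y) \<and>
     (\<forall>c c' x. smul (c + c') x = smul c x + smul c' x) \<and>
     (\<forall>c c' x. smul (c * c') x = smul c (smul c' x)) \<and>
     (\<forall>x. smul 1 x = x) \<and>
     (\<forall>c x y. smul c (x * y) = smul c x * y \<and> smul c (x * y) = x * smul c y)"

definition anti_hom_W :: "('k::comm_ring_1 \<Rightarrow> 'w::ring_1 \<Rightarrow> 'w) \<Rightarrow> ('w \<Rightarrow> 'w) \<Rightarrow> bool" where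
  "anti_hom_W smul \<phi> \<longleftrightarrow>
     (\<forall>x y. \<phi> (x + y) = \<phi> x + \<phi> y) \<and> (\<forall>c x. \<phi> (smul c x) = smul c (\<phi> x)) \<and>
     \<phi> 1 = 1 \<and> (\<forall>x y. \<phi> (x * y) = \<phi> y * \<phi> x)"

definition sref :: "nat \<Rightarrow> nat \<Rightarrow> nat" where
  "sref i = Transposition.transpose i (Suc i)"

definition word_perm :: "nat list \<Rightarrow> nat \<Rightarrow> nat" where
  "word_perm ws = foldr (\<lambda>i p. sref i \<circ> p) ws id"

definition reduced_word :: "nat \<Rightarrow> (nat \<Rightarrow> nat) \<Rightarrow> nat list \<Rightarrow> bool" where
  "reduced_word d w ws \<longleftrightarrow> set ws \<subseteq> {1..<d} \<and> word_perm ws = w \<and>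
     (\<forall>vs. set vs \<subseteq> {1..<d} \<and> word_perm vs = w \<longrightarrow> length ws \<le> length vs)"

definition Hw :: "(nat \<Rightarrow> 'w::monoid_mult) \<Rightarrow> nat \<Rightarrow> (nat \<Rightarrow> nat) \<Rightarrow> 'w" where
  "Hw H d w = prod_list (map H (SOME ws. reduced_word d w ws))"

text \<open>The defining relations of the quantum wreath product, for the K-algebra 'w with the
  algebra map iota : B^(x)d -> 'w and elements H 1, ..., H (d-1).\<close>
definition qwp_relations ::
  "('k::comm_ring_1 \<Rightarrow> 'w::ring_1 \<Rightarrow> 'w) \<Rightarrow> (('j list \<Rightarrow>\<^sub>0 'k) \<Rightarrow> 'w) \<Rightarrow> (nat \<Rightarrow> 'w) \<Rightarrow> nat
   \<Rightarrow> (('j \<Rightarrow>\<^sub>0 'k) \<Rightarrow> ('j \<Rightarrow>\<^sub>0 'k) \<Rightarrow> ('j \<Rightarrow>\<^sub>0 'k)) \<Rightarrow> ('j \<Rightarrow>\<^sub>0 'k)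
   \<Rightarrow> ('j list \<Rightarrow>\<^sub>0 'k) \<Rightarrow> ('j list \<Rightarrow>\<^sub>0 'k)
   \<Rightarrow> (('j list \<Rightarrow>\<^sub>0 'k) \<Rightarrow> ('j list \<Rightarrow>\<^sub>0 'k)) \<Rightarrow> (('j list \<Rightarrow>\<^sub>0 'k) \<Rightarrow> ('j list \<Rightarrow>\<^sub>0 'k)) \<Rightarrow> bool" where
  "qwp_relations smul iota H d mulB oneB S R \<sigma> \<rho> \<longleftrightarrow>
     K_algebra_W smul \<and>
     (\<forall>x\<in>tens_space d. \<forall>y\<in>tens_space d.
         iota (x + y) = iota x + iota y \<and> iota (mulT mulB x y) = iota x * iota y) \<and>
     (\<forall>c. \<forall>x\<in>tens_space d. iota (pscale c x) = smul c (iota x)) \<and>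
     iota (oneT oneB d) = 1 \<and>
     (\<forall>k. 1 \<le> k \<and> k + 1 < d \<longrightarrow> H k * H (k + 1) * H k = H (k + 1) * H k * H (k + 1)) \<and>
     (\<forall>i\<in>{1..<d}. \<forall>j\<in>{1..<d}. i + 2 \<le> j \<or> j + 2 \<le> i \<longrightarrow> H i * H j = H j * H i) \<and>
     (\<forall>i\<in>{1..<d}. H i * H i = iota (emb oneB d i S) * H i + iota (emb oneB d i R)) \<and>
     (\<forall>i\<in>{1..<d}. \<forall>b\<in>tens_space d.
         H i * iota b = iota (loc i \<sigma> b) * H i + iota (loc i \<rho> b))"

definition has_PBW_basis ::
  "('k::comm_ring_1 \<Rightarrow> 'w::ring_1 \<Rightarrow> 'w) \<Rightarrow> (('j list \<Rightarrow>\<^sub>0 'k) \<Rightarrow> 'w) \<Rightarrow> (nat \<Rightarrow> 'w) \<Rightarrow> nat \<Rightarrow> bool" where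
  "has_PBW_basis smul iota H d \<longleftrightarrow>
     (\<forall>x. \<exists>!f :: ('j list \<times> (nat \<Rightarrow> nat)) \<Rightarrow>\<^sub>0 'k.
        Poly_Mapping.keys f \<subseteq> {(a, w). length a = d \<and> w permutes {1..d}} \<and>
        x = (\<Sum>p\<in>Poly_Mapping.keys f. smul (Poly_Mapping.lookup f p) (iota (ebasis (fst p)) * Hw H d (snd p))))"

end

(*
  Necessity: applying * to the relations H_i H_i = S_i H_i + R_i and H_i b = sigma_i(b) H_i + rho_i(b)
  and comparing PBW coordinates in the columns H_id and H_(s_i) gives the conditions, placed at
  position i of B^(x)d.

  Sufficiency: define * on the PBW basis by (b H_w)^* = H_(w^-1) b^*.  The conditions say that the
  images of the defining relations under * hold in B wr H(d).  One shows *(g_1 ... g_n) = g_n^* ... g_1^*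
  for every word in the generators, by induction on the number of letters H: the mixed relation moves
  all letters from B^(x)d to the front, and its image under * moves their stars to the back, leaving the
  leading term c H_(i_1) ... H_(i_k) on both sides.  If i_1 ... i_k is reduced, Matsumoto's theorem
  identifies its product with an H_w; otherwise braid moves produce a square H_i H_i, and the quadratic
  relation shortens the word.  As words span, * is multiplicative.  Finally ** acts on the PBW basis by
  b H_w |-> b^** H_w, which is invertible, so * is bijective.
*)

theory Submission
  imports Defs
begin

section \<open>Reduced words in the symmetric group\<close>

lemma word_perm_Nil [simp]: "word_perm [] = id"
  by (simp add: word_perm_def)

lemma word_perm_Cons [simp]: "word_perm (i # u) = sref i \<circ> word_perm u"
  by (simp add: word_perm_def)

lemma word_perm_append: "word_perm (u @ v) = word_perm u \<circ> word_perm v"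
  by (induction u) (auto simp: comp_assoc)

lemma word_perm_snoc: "word_perm (u @ [i]) = word_perm u \<circ> sref i"
  by (simp add: word_perm_append)

lemma sref_permutes: "i \<in> {1..<d} \<Longrightarrow> sref i permutes {1..d}"
  unfolding sref_def by (rule permutes_swap_id) auto

lemma permutes_comp_sref: "w permutes {1..d} \<Longrightarrow> i \<in> {1..<d} \<Longrightarrow> w \<circ> sref i permutes {1..d}"
  by (metis permutes_compose sref_permutes)

lemma word_perm_permutes: "set u \<subseteq> {1..<d} \<Longrightarrow> word_perm u permutes {1..d}"
proof (induction u)
  case (Cons i u)
  then have i: "i \<in> {1..<d}" and p: "word_perm u permutes {1..d}" by simp_all
  have "sref i \<circ> word_perm u permutes {1..d}" by (rule permutes_compose[OF p sref_permutes[OF i]])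
  then show ?case by (simp only: word_perm_Cons)
qed (simp add: permutes_id id_def[symmetric])

lemma sref_sref [simp]: "sref i \<circ> sref i = id"
  by (simp add: sref_def)

lemma sref_sref_apply [simp]: "sref i (sref i x) = x"
  by (simp add: sref_def)

lemma comp_sref_sref [simp]: "w \<circ> sref i \<circ> sref i = w"
  by (simp add: comp_assoc)

lemma sref_sref_comp [simp]: "sref i \<circ> (sref i \<circ> f) = f"
  by (simp add: comp_assoc[symmetric])

lemma sref_comm: "i + 2 \<le> j \<or> j + 2 \<le> i \<Longrightarrow> sref i \<circ> sref j = sref j \<circ> sref i"
  by (auto simp: fun_eq_iff sref_def transpose_def)

lemma sref_braid: "sref i \<circ> sref (Suc i) \<circ> sref i = sref (Suc i) \<circ> sref i \<circ> sref (Suc i)"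
  by (auto simp: fun_eq_iff sref_def transpose_def)

lemma sref_ne_id: "sref i \<noteq> id"
  by (metis id_apply n_not_Suc_n sref_def transpose_apply_first)

lemma permutes_apply_neq: "w permutes A \<Longrightarrow> x \<noteq> y \<Longrightarrow> w x \<noteq> w y"
  by (metis permutes_inj injD)

definition inversions :: "nat \<Rightarrow> (nat \<Rightarrow> nat) \<Rightarrow> (nat \<times> nat) set" where
  "inversions d w = {(p, q). 1 \<le> p \<and> p < q \<and> q \<le> d \<and> w q < w p}"

definition inv_count :: "nat \<Rightarrow> (nat \<Rightarrow> nat) \<Rightarrow> nat" where
  "inv_count d w = card (inversions d w)"

lemma finite_inversions: "finite (inversions d w)"
  unfolding inversions_def by (rule finite_subset[of _ "{1..d} \<times> {1..d}"]) auto

lemma inv_count_id [simp]: "inv_count d id = 0"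
proof -
  have "inversions d id = {}" by (auto simp: inversions_def)
  then show ?thesis by (simp add: inv_count_def)
qed

lemma sref_less_preserved: "p < q \<Longrightarrow> (p, q) \<noteq> (i, Suc i) \<Longrightarrow> sref i p < sref i q"
  by (auto simp: sref_def transpose_def)

lemma sref_image_inversions:
  assumes i: "i \<in> {1..<d}"
  shows "map_prod (sref i) (sref i) ` (inversions d w - {(i, Suc i)})
           \<subseteq> inversions d (w \<circ> sref i) - {(i, Suc i)}"
proof
  fix x assume "x \<in> map_prod (sref i) (sref i) ` (inversions d w - {(i, Suc i)})"
  then obtain p q where pq: "(p, q) \<in> inversions d w" "(p, q) \<noteq> (i, Suc i)"
    and x: "x = (sref i p, sref i q)" by auto
  have "sref i p < sref i q"
    using pq by (intro sref_less_preserved) (auto simp: inversions_def)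
  moreover have "x \<noteq> (i, Suc i)"
    using pq(1) by (auto simp: x inversions_def sref_def transpose_def split: if_splits)
  moreover have "1 \<le> sref i p" "sref i q \<le> d"
    using pq(1) i by (auto simp: sref_def transpose_def inversions_def)
  ultimately show "x \<in> inversions d (w \<circ> sref i) - {(i, Suc i)}"
    using pq(1) by (auto simp: x inversions_def)
qed

text \<open>Conjugation by \<open>sref i\<close> matches the inversions of \<open>w\<close> and \<open>w \<circ> sref i\<close>
  other than \<open>(i, i+1)\<close>, so the two counts differ exactly by whether \<open>(i, i+1)\<close> is one.\<close>

lemma card_inversions_comp_sref:
  assumes i: "i \<in> {1..<d}"
  shows "card (inversions d (w \<circ> sref i) - {(i, Suc i)}) = card (inversions d w - {(i, Suc i)})"
proof -
  let ?f = "map_prod (sref i) (sref i)"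
  have inj: "inj_on ?f A" for A
    by (rule inj_on_subset[OF map_prod_inj_on[of _ UNIV _ UNIV]])
      (auto intro: inj_on_inverseI[where g = "sref i"])
  have "card (inversions d w - {(i, Suc i)}) \<le> card (inversions d (w \<circ> sref i) - {(i, Suc i)})"
    by (rule card_inj_on_le[OF inj sref_image_inversions[OF i]]) (simp add: finite_inversions)
  moreover have "card (inversions d (w \<circ> sref i) - {(i, Suc i)}) \<le> card (inversions d w - {(i, Suc i)})"
    using card_inj_on_le[OF inj sref_image_inversions[OF i, of "w \<circ> sref i"]]
    by (simp add: finite_inversions)
  ultimately show ?thesis by linarith
qed

lemma inv_count_ascent:
  assumes i: "i \<in> {1..<d}" and asc: "w i < w (Suc i)"
  shows "inv_count d (w \<circ> sref i) = Suc (inv_count d w)"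
proof -
  have t: "(i, Suc i) \<in> inversions d (w \<circ> sref i)" "(i, Suc i) \<notin> inversions d w"
    using i asc by (auto simp: inversions_def sref_def)
  have "inv_count d (w \<circ> sref i) = Suc (card (inversions d (w \<circ> sref i) - {(i, Suc i)}))"
    unfolding inv_count_def by (rule card_Suc_Diff1[symmetric, OF finite_inversions t(1)])
  also have "\<dots> = Suc (inv_count d w)"
    using card_inversions_comp_sref[OF i, of w] t(2) by (simp add: inv_count_def)
  finally show ?thesis .
qed

lemma inv_count_descent:
  assumes i: "i \<in> {1..<d}" and desc: "w (Suc i) < w i"
  shows "inv_count d w = Suc (inv_count d (w \<circ> sref i))"
proof -
  have "(w \<circ> sref i) i < (w \<circ> sref i) (Suc i)" using desc by (simp add: sref_def)
  then show ?thesis using inv_count_ascent[OF i, of "w \<circ> sref i"] by simp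
qed

lemma inv_count_comp_sref:
  assumes "w permutes {1..d}" "i \<in> {1..<d}"
  shows "inv_count d (w \<circ> sref i) = Suc (inv_count d w) \<or> inv_count d w = Suc (inv_count d (w \<circ> sref i))"
  using permutes_apply_neq[OF assms(1), of i "Suc i"] inv_count_ascent[OF assms(2), of w]
    inv_count_descent[OF assms(2), of w] by (meson linorder_neqE_nat n_not_Suc_n)

lemma inv_count_le_length: "set u \<subseteq> {1..<d} \<Longrightarrow> inv_count d (word_perm u) \<le> length u"
proof (induction u rule: rev_induct)
  case (snoc i u)
  then have "word_perm u permutes {1..d}" "set u \<subseteq> {1..<d}" "i \<in> {1..<d}"
    using word_perm_permutes by auto
  then have "inv_count d (word_perm u \<circ> sref i) \<le> Suc (length u)"
    using snoc inv_count_comp_sref[of "word_perm u" d i] by auto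
  then show ?case unfolding word_perm_snoc length_append_singleton .
qed simp

lemma permutes_ascending_eq_id:
  assumes w: "w permutes {1..d}" and asc: "\<forall>i\<in>{1..<d}. w i < w (Suc i)"
  shows "w = id"
proof -
  have rng: "x \<in> {1..d} \<Longrightarrow> w x \<in> {1..d}" for x using w by (metis permutes_in_image)
  have lo: "k \<le> w k" if "k \<in> {1..d}" for k
    using that
  proof (induction k)
    case (Suc k)
    show ?case
    proof (cases "k = 0")
      case True then show ?thesis using rng[OF Suc.prems] by simp
    next
      case False
      then have "k \<le> w k" "w k < w (Suc k)" using Suc asc by auto
      then show ?thesis by simp
    qed
  qed simp
  have hi: "w (d - j) \<le> d - j" if "j < d" for j
    using that
  proof (induction j)
    case 0 then show ?case using rng[of d] by auto
  next
    case (Suc j)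
    have "w (d - Suc j) < w (Suc (d - Suc j))" using asc Suc.prems by auto
    moreover have "Suc (d - Suc j) = d - j" using Suc.prems by auto
    ultimately show ?case using Suc by auto
  qed
  have fix_in: "w k = k" if "k \<in> {1..d}" for k
    using hi[of "d - k"] lo[OF that] that by auto
  show ?thesis
  proof
    fix k show "w k = id k"
      using fix_in permutes_not_in[OF w] by (cases "k \<in> {1..d}") simp_all
  qed
qed

lemma permutes_descent_exists:
  assumes w: "w permutes {1..d}" and "w \<noteq> id"
  shows "\<exists>i\<in>{1..<d}. w (Suc i) < w i"
proof (rule ccontr)
  assume "\<not> ?thesis"
  then have "\<forall>i\<in>{1..<d}. w i < w (Suc i)"
    using permutes_apply_neq[OF w] by (metis linorder_neqE_nat n_not_Suc_n)
  then show False using permutes_ascending_eq_id[OF w] assms(2) by blast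
qed

lemma minimal_word_exists:
  "w permutes {1..d} \<Longrightarrow> \<exists>u. set u \<subseteq> {1..<d} \<and> word_perm u = w \<and> length u = inv_count d w"
proof (induction "inv_count d w" arbitrary: w)
  case 0
  have "w = id"
  proof (rule ccontr)
    assume "w \<noteq> id"
    then obtain i where "i \<in> {1..<d}" "w (Suc i) < w i"
      using permutes_descent_exists[OF 0(2)] by blast
    then show False using inv_count_descent 0(1) by fastforce
  qed
  then show ?case by (intro exI[of _ "[]"]) (use 0(1) in simp)
next
  case (Suc n)
  then have "w \<noteq> id" by auto
  then obtain i where i: "i \<in> {1..<d}" "w (Suc i) < w i"
    using permutes_descent_exists[OF Suc.prems] by blast
  have n: "inv_count d (w \<circ> sref i) = n" using inv_count_descent[OF i] Suc.hyps(2) by simp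
  obtain u where u: "set u \<subseteq> {1..<d}" "word_perm u = w \<circ> sref i" "length u = n"
    using Suc.hyps(1)[OF n[symmetric] permutes_comp_sref[OF Suc.prems i(1)]] n by auto
  then show ?case
    using i Suc.hyps(2) by (intro exI[of _ "u @ [i]"]) (auto simp: word_perm_snoc)
qed

section \<open>Braid moves and Matsumoto's theorem\<close>

inductive braid_eq :: "nat \<Rightarrow> nat list \<Rightarrow> nat list \<Rightarrow> bool" for d where
  braid_eq_refl: "braid_eq d u u"
| braid_eq_sym: "braid_eq d u v \<Longrightarrow> braid_eq d v u"
| braid_eq_trans: "braid_eq d u v \<Longrightarrow> braid_eq d v w \<Longrightarrow> braid_eq d u w"
| braid_eq_comm: "i \<in> {1..<d} \<Longrightarrow> j \<in> {1..<d} \<Longrightarrow> i + 2 \<le> j \<or> j + 2 \<le> i \<Longrightarrow>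
    braid_eq d (x @ [i, j] @ y) (x @ [j, i] @ y)"
| braid_eq_braid: "1 \<le> k \<Longrightarrow> k + 1 < d \<Longrightarrow>
    braid_eq d (x @ [k, Suc k, k] @ y) (x @ [Suc k, k, Suc k] @ y)"

lemma braid_eq_context: "braid_eq d u v \<Longrightarrow> braid_eq d (x @ u @ y) (x @ v @ y)"
proof (induction rule: braid_eq.induct)
  case (braid_eq_comm i j x' y')
  then show ?case using braid_eq.braid_eq_comm[of i d j "x @ x'" "y' @ y"] by simp
next
  case (braid_eq_braid k x' y')
  then show ?case using braid_eq.braid_eq_braid[of k d "x @ x'" "y' @ y"] by simp
qed (auto intro: braid_eq.intros)

lemma braid_eq_append: "braid_eq d u v \<Longrightarrow> braid_eq d (u @ y) (v @ y)"
  using braid_eq_context[of d u v "[]" y] by simp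

lemma braid_eq_rev: "braid_eq d u v \<Longrightarrow> braid_eq d (rev u) (rev v)"
proof (induction rule: braid_eq.induct)
  case (braid_eq_comm i j x y)
  then show ?case using braid_eq.braid_eq_comm[of j d i "rev y" "rev x"] by auto
next
  case (braid_eq_braid k x y)
  then show ?case using braid_eq.braid_eq_braid[of k d "rev y" "rev x"] by simp
qed (auto intro: braid_eq.intros)

lemma braid_eq_prod_list:
  fixes H :: "nat \<Rightarrow> 'w::monoid_mult"
  assumes braid: "\<forall>k. 1 \<le> k \<and> k + 1 < d \<longrightarrow> H k * H (k + 1) * H k = H (k + 1) * H k * H (k + 1)"
    and comm: "\<forall>i\<in>{1..<d}. \<forall>j\<in>{1..<d}. i + 2 \<le> j \<or> j + 2 \<le> i \<longrightarrow> H i * H j = H j * H i"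
  shows "braid_eq d u v \<Longrightarrow> prod_list (map H u) = prod_list (map H v)"
proof (induction rule: braid_eq.induct)
  case (braid_eq_comm i j x y)
  then have "H i * H j = H j * H i" using comm by blast
  then show ?case by (simp add: mult.assoc[symmetric])
next
  case (braid_eq_braid k x y)
  then have "H k * H (Suc k) * H k = H (Suc k) * H k * H (Suc k)" using braid by auto
  then show ?case by (simp add: mult.assoc[symmetric])
qed auto

definition reduced :: "nat \<Rightarrow> nat list \<Rightarrow> bool" where
  "reduced d u \<longleftrightarrow> set u \<subseteq> {1..<d} \<and> length u = inv_count d (word_perm u)"

lemma reduced_permutes: "reduced d u \<Longrightarrow> word_perm u permutes {1..d}"
  unfolding reduced_def using word_perm_permutes by blast

lemma reduced_Nil: "reduced d []"
  by (simp add: reduced_def)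

lemma reduced_single: "i \<in> {1..<d} \<Longrightarrow> reduced d [i]"
  using inv_count_ascent[of i d id] by (simp add: reduced_def)

lemma reduced_snocD:
  assumes "reduced d (u @ [s])"
  shows "reduced d u \<and> word_perm (u @ [s]) (Suc s) < word_perm (u @ [s]) s
         \<and> word_perm u = word_perm (u @ [s]) \<circ> sref s"
proof -
  let ?w = "word_perm (u @ [s])"
  have s: "s \<in> {1..<d}" and su: "set u \<subseteq> {1..<d}" using assms by (auto simp: reduced_def)
  have wu: "word_perm u = ?w \<circ> sref s" by (simp add: word_perm_snoc)
  have len: "length u + 1 = inv_count d ?w" using assms by (simp add: reduced_def)
  have "\<not> ?w s < ?w (Suc s)"
    using inv_count_ascent[OF s] wu inv_count_le_length[OF su] len by auto
  then have desc: "?w (Suc s) < ?w s"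
    using permutes_apply_neq[OF reduced_permutes[OF assms], of s "Suc s"] by auto
  then show ?thesis
    using inv_count_descent[OF s desc] wu len su by (auto simp: reduced_def)
qed

lemma reduced_common_prefix_commuting:
  assumes w: "w permutes {1..d}" and s: "s \<in> {1..<d}" and t: "t \<in> {1..<d}" and st: "s + 2 \<le> t"
    and ds: "w (Suc s) < w s" and dt: "w (Suc t) < w t"
  obtains z where "reduced d (z @ [t])" "word_perm (z @ [t]) = w \<circ> sref s"
    and "reduced d (z @ [s])" "word_perm (z @ [s]) = w \<circ> sref t"
proof -
  define y where "y = w \<circ> sref s \<circ> sref t"
  have "(w \<circ> sref s) (Suc t) < (w \<circ> sref s) t"
    using dt st by (auto simp: sref_def transpose_def)
  then have n: "inv_count d (w \<circ> sref s) = Suc (inv_count d y)"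
    unfolding y_def by (rule inv_count_descent[OF t])
  have y_alt: "y = w \<circ> sref t \<circ> sref s"
    using sref_comm[of s t] st by (simp add: y_def comp_assoc)
  obtain z where z: "set z \<subseteq> {1..<d}" "word_perm z = y" "length z = inv_count d y"
    using minimal_word_exists[OF permutes_comp_sref[OF permutes_comp_sref[OF w s] t]] y_def by blast
  have p: "word_perm (z @ [t]) = w \<circ> sref s" "word_perm (z @ [s]) = w \<circ> sref t"
    using z(2) by (simp add: word_perm_snoc y_def comp_assoc, simp add: word_perm_snoc y_alt comp_assoc)
  have "reduced d (z @ [t])" "reduced d (z @ [s])"
    unfolding reduced_def p using z s t n inv_count_descent[OF s ds] inv_count_descent[OF t dt] by simp_all
  with p show ?thesis using that by blast
qed

lemma reduced_common_prefix_braid: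
  assumes w: "w permutes {1..d}" and s: "s \<in> {1..<d}" and t: "t \<in> {1..<d}" and ts: "t = Suc s"
    and ds: "w (Suc s) < w s" and dt: "w (Suc t) < w t"
  obtains z where "reduced d (z @ [s, t])" "word_perm (z @ [s, t]) = w \<circ> sref s"
    and "reduced d (z @ [t, s])" "word_perm (z @ [t, s]) = w \<circ> sref t"
proof -
  define y where "y = w \<circ> sref s \<circ> sref t \<circ> sref s"
  have "(w \<circ> sref s) (Suc t) < (w \<circ> sref s) t" "(w \<circ> sref s \<circ> sref t) (Suc s) < (w \<circ> sref s \<circ> sref t) s"
    using dt ds ts by (auto simp: sref_def transpose_def)
  then have n: "inv_count d (w \<circ> sref s) = Suc (Suc (inv_count d y))"
    unfolding y_def using inv_count_descent[OF t] inv_count_descent[OF s] by presburger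
  have y_alt: "y = w \<circ> sref t \<circ> sref s \<circ> sref t"
    using sref_braid[of s] ts by (simp add: y_def comp_assoc)
  obtain z where z: "set z \<subseteq> {1..<d}" "word_perm z = y" "length z = inv_count d y"
    using minimal_word_exists[OF permutes_comp_sref[OF permutes_comp_sref[OF permutes_comp_sref[OF w s] t] s]]
      y_def by blast
  have p: "word_perm (z @ [s, t]) = w \<circ> sref s" "word_perm (z @ [t, s]) = w \<circ> sref t"
    using z(2) by (simp add: word_perm_append y_def comp_assoc, simp add: word_perm_append y_alt comp_assoc)
  have "reduced d (z @ [s, t])" "reduced d (z @ [t, s])"
    unfolding reduced_def p using z s t n inv_count_descent[OF s ds] inv_count_descent[OF t dt] by simp_all
  with p show ?thesis using that by blast
qed

text \<open>A common reduced prefix \<open>z\<close> of both words lets the induction hypothesis rewrite them to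
  \<open>z p s\<close> and \<open>z q t\<close>, which differ by one commutation or braid move.\<close>

lemma matsumoto_step:
  assumes IH: "\<And>u' v'. length u' = n \<Longrightarrow> reduced d u' \<Longrightarrow> reduced d v' \<Longrightarrow>
      word_perm u' = word_perm v' \<Longrightarrow> braid_eq d u' v'"
    and u: "reduced d (u @ [s])" and v: "reduced d (v @ [t])" and len: "length u = n"
    and eq: "word_perm (u @ [s]) = word_perm (v @ [t])" and st: "s < t"
  shows "braid_eq d (u @ [s]) (v @ [t])"
proof -
  define w where "w = word_perm (u @ [s])"
  have wp: "w permutes {1..d}" unfolding w_def by (rule reduced_permutes[OF u])
  have s: "s \<in> {1..<d}" and t: "t \<in> {1..<d}" using u v by (auto simp: reduced_def)
  obtain ru: "reduced d u" and ds: "w (Suc s) < w s" and wu: "word_perm u = w \<circ> sref s"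
    using reduced_snocD[OF u] w_def by blast
  obtain rv: "reduced d v" and dt: "w (Suc t) < w t" and wv: "word_perm v = w \<circ> sref t"
    using reduced_snocD[OF v] w_def eq by metis
  have lv: "length v = n" using u v eq len by (simp add: reduced_def)
  have exchange: "braid_eq d (u @ [s]) (v @ [t])"
    if "reduced d (z @ p)" "word_perm (z @ p) = w \<circ> sref s"
      "reduced d (z @ q)" "word_perm (z @ q) = w \<circ> sref t" "braid_eq d (p @ [s]) (q @ [t])" for z p q
  proof -
    have "braid_eq d (u @ [s]) (z @ p @ [s])"
      using braid_eq_append[OF IH[OF len ru that(1)], of "[s]"] wu that(2) by simp
    moreover have "braid_eq d (z @ q @ [t]) (v @ [t])"
      using braid_eq_append[OF IH[OF lv rv that(3)], of "[t]"] wv that(4) by (simp add: braid_eq_sym)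
    ultimately show ?thesis
      using braid_eq_context[OF that(5), of z "[]"] by (auto intro: braid_eq_trans)
  qed
  show ?thesis
  proof (cases "Suc s < t")
    case True
    then obtain z where "reduced d (z @ [t])" "word_perm (z @ [t]) = w \<circ> sref s"
      "reduced d (z @ [s])" "word_perm (z @ [s]) = w \<circ> sref t"
      using reduced_common_prefix_commuting[OF wp s t _ ds dt] by auto
    moreover have "braid_eq d ([t] @ [s]) ([s] @ [t])"
      using braid_eq_comm[of t d s "[]" "[]"] s t True by simp
    ultimately show ?thesis by (rule exchange)
  next
    case False
    then have ts: "t = Suc s" using st by simp
    then obtain z where "reduced d (z @ [s, t])" "word_perm (z @ [s, t]) = w \<circ> sref s"
      "reduced d (z @ [t, s])" "word_perm (z @ [t, s]) = w \<circ> sref t"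
      using reduced_common_prefix_braid[OF wp s t ts ds dt] by auto
    moreover have "braid_eq d ([s, t] @ [s]) ([t, s] @ [t])"
      using braid_eq_braid[of s d "[]" "[]"] s t ts by simp
    ultimately show ?thesis by (rule exchange)
  qed
qed

theorem matsumoto:
  "reduced d u \<Longrightarrow> reduced d v \<Longrightarrow> word_perm u = word_perm v \<Longrightarrow> braid_eq d u v"
proof (induction "length u" arbitrary: u v)
  case 0
  then have "u = []" by simp
  then have "word_perm v = id" using 0(4) by (metis word_perm_Nil)
  then have "length v = 0" using 0(3) inv_count_id unfolding reduced_def by metis
  then show ?case using \<open>u = []\<close> by (simp add: braid_eq_refl)
next
  case (Suc n)
  obtain u' s where us: "u = u' @ [s]" using Suc.hyps(2) by (metis length_Suc_conv_rev)
  have "length v = Suc n" using Suc by (simp add: reduced_def)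
  then obtain v' t where vt: "v = v' @ [t]" by (metis length_Suc_conv_rev)
  have lu: "length u' = n" and lv: "length v' = n"
    using Suc.hyps(2) \<open>length v = Suc n\<close> us vt by simp_all
  have IH: "braid_eq d x y"
    if "length x = n" "reduced d x" "reduced d y" "word_perm x = word_perm y" for x y
    using Suc.hyps(1)[of x y] that by simp
  consider "s = t" | "s < t" | "t < s" by linarith
  then show ?case
  proof cases
    case 1
    have "reduced d u'" "word_perm u' = word_perm u \<circ> sref s"
      using reduced_snocD[of d u' s] Suc.prems(1) us by auto
    moreover have "reduced d v'" "word_perm v' = word_perm v \<circ> sref t"
      using reduced_snocD[of d v' t] Suc.prems(2) vt by auto
    ultimately have "braid_eq d u' v'"
      using IH[OF lu] Suc.prems(3) 1 by simp
    then show ?thesis using us vt 1 by (simp add: braid_eq_append)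
  next
    case 2
    show ?thesis
      unfolding us vt by (rule matsumoto_step[OF IH _ _ lu]) (use Suc.prems us vt 2 in simp_all)
  next
    case 3
    have "braid_eq d (v' @ [t]) (u' @ [s])"
      by (rule matsumoto_step[OF IH _ _ lv]) (use Suc.prems us vt 3 in simp_all)
    then show ?thesis unfolding us vt by (rule braid_eq_sym)
  qed
qed

lemma not_reduced_braid_eq_square:
  "set u \<subseteq> {1..<d} \<Longrightarrow> \<not> reduced d u \<Longrightarrow>
   \<exists>u1 u2 i. i \<in> {1..<d} \<and> set u1 \<subseteq> {1..<d} \<and> set u2 \<subseteq> {1..<d} \<and>
      length u1 + length u2 + 2 = length u \<and> braid_eq d u (u1 @ [i, i] @ u2)"
proof (induction u rule: rev_induct)
  case Nil then show ?case by (simp add: reduced_def)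
next
  case (snoc s u)
  show ?case
  proof (cases "reduced d u")
    case False
    then obtain u1 u2 i where h: "i \<in> {1..<d}" "set u1 \<subseteq> {1..<d}" "set u2 \<subseteq> {1..<d}"
      "length u1 + length u2 + 2 = length u" "braid_eq d u (u1 @ [i, i] @ u2)"
      using snoc by auto
    have "braid_eq d (u @ [s]) (u1 @ [i, i] @ (u2 @ [s]))" using braid_eq_append[OF h(5), of "[s]"] by simp
    then show ?thesis using snoc.prems h
      by (intro exI[of _ u1] exI[of _ "u2 @ [s]"] exI[of _ i]) auto
  next
    case True
    let ?w = "word_perm u"
    have s: "s \<in> {1..<d}" using snoc by auto
    have wp: "?w permutes {1..d}" using True by (rule reduced_permutes)
    have lu: "length u = inv_count d ?w" using True by (simp add: reduced_def)
    have "\<not> ?w s < ?w (Suc s)"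
      using snoc.prems lu inv_count_ascent[OF s] by (auto simp: reduced_def word_perm_snoc)
    then have ds: "?w (Suc s) < ?w s" using permutes_apply_neq[OF wp, of s "Suc s"] by auto
    obtain z where z: "set z \<subseteq> {1..<d}" "word_perm z = ?w \<circ> sref s" "length z = inv_count d (?w \<circ> sref s)"
      using minimal_word_exists[OF permutes_comp_sref[OF wp s]] by blast
    have wz: "word_perm (z @ [s]) = ?w" using z(2) by (simp add: word_perm_snoc)
    have "reduced d (z @ [s])" using z s inv_count_descent[OF s ds] wz by (auto simp: reduced_def)
    then have "braid_eq d u (z @ [s])" using matsumoto[OF True] wz by metis
    then have "braid_eq d (u @ [s]) (z @ [s, s] @ [])" using braid_eq_append by fastforce
    then show ?thesis using z s lu inv_count_descent[OF s ds] by (intro exI[of _ z] exI[of _ "[]"] exI[of _ s]) auto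
  qed
qed

definition red_expr :: "nat \<Rightarrow> (nat \<Rightarrow> nat) \<Rightarrow> nat list" where
  "red_expr d w = (SOME ws. reduced_word d w ws)"

lemma red_expr_props:
  assumes "w permutes {1..d}"
  shows "set (red_expr d w) \<subseteq> {1..<d} \<and> word_perm (red_expr d w) = w \<and> length (red_expr d w) = inv_count d w"
proof -
  obtain u where u: "set u \<subseteq> {1..<d}" "word_perm u = w" "length u = inv_count d w"
    using minimal_word_exists[OF assms] by blast
  have "reduced_word d w u" using u inv_count_le_length by (auto simp: reduced_word_def) metis
  then have r: "reduced_word d w (red_expr d w)" unfolding red_expr_def by (rule someI)
  then have "length (red_expr d w) \<le> length u" using u by (auto simp: reduced_word_def)
  moreover have "inv_count d w \<le> length (red_expr d w)"
    using r inv_count_le_length by (auto simp: reduced_word_def) metis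
  ultimately show ?thesis using r u by (auto simp: reduced_word_def)
qed

lemma Hw_red_expr: "Hw H d w = prod_list (map H (red_expr d w))"
  by (simp add: Hw_def red_expr_def)

lemma reduced_red_expr: "w permutes {1..d} \<Longrightarrow> reduced d (red_expr d w)"
  using red_expr_props by (auto simp: reduced_def)


section \<open>Linear maps of finitely supported functions\<close>

lemma lookup_pscale [simp]: "Poly_Mapping.lookup (pscale c x) a = c * Poly_Mapping.lookup x a"
  by (simp add: pscale_def Poly_Mapping.map.rep_eq when_def)

lemma pscale_add: "pscale c (x + y) = pscale c x + pscale c y"
  by (rule poly_mapping_eqI) (simp add: lookup_add algebra_simps)

lemma pscale_add_left: "pscale (c + c') x = pscale c x + pscale c' x"
  by (rule poly_mapping_eqI) (simp add: lookup_add algebra_simps)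

lemma pscale_pscale [simp]: "pscale c (pscale c' x) = pscale (c * c') x"
  by (rule poly_mapping_eqI) (simp add: algebra_simps)

lemma pscale_one [simp]: "pscale 1 x = x"
  by (rule poly_mapping_eqI) simp

lemma pscale_zero [simp]: "pscale c 0 = 0"
  by (rule poly_mapping_eqI) simp

lemma pscale_zero_left [simp]: "pscale 0 x = 0"
  by (rule poly_mapping_eqI) simp

lemma pscale_single [simp]: "pscale c (Poly_Mapping.single a v) = Poly_Mapping.single a (c * v)"
  by (rule poly_mapping_eqI) (simp add: lookup_single when_def)

lemma pscale_sum: "pscale c (sum f A) = (\<Sum>i\<in>A. pscale c (f i))"
  by (rule poly_mapping_eqI) (simp add: lookup_sum sum_distrib_left)

lemma pscale_minus_one: "pscale (-1) x = - x"
  by (rule poly_mapping_eqI) simp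

lemma keys_pscale: "Poly_Mapping.keys (pscale c x) \<subseteq> Poly_Mapping.keys x"
  by (auto simp: in_keys_iff)

lemma lin_ext_superset:
  assumes "finite A" "Poly_Mapping.keys x \<subseteq> A"
  shows "lin_ext f x = (\<Sum>a\<in>A. pscale (Poly_Mapping.lookup x a) (f a))"
  unfolding lin_ext_def
  by (rule sum.mono_neutral_left) (use assms in \<open>auto simp: in_keys_iff\<close>)

lemma lin_ext_add: "lin_ext f (x + y) = lin_ext f x + lin_ext f y"
proof -
  let ?A = "Poly_Mapping.keys x \<union> Poly_Mapping.keys y"
  have "lin_ext f (x + y) = (\<Sum>a\<in>?A. pscale (Poly_Mapping.lookup (x + y) a) (f a))"
    by (rule lin_ext_superset) (auto dest: subsetD[OF keys_add])
  also have "\<dots> = (\<Sum>a\<in>?A. pscale (Poly_Mapping.lookup x a) (f a)) + (\<Sum>a\<in>?A. pscale (Poly_Mapping.lookup y a) (f a))"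
    by (simp add: lookup_add pscale_add_left sum.distrib)
  also have "\<dots> = lin_ext f x + lin_ext f y"
    by (simp add: lin_ext_superset[symmetric])
  finally show ?thesis .
qed

lemma lin_ext_pscale: "lin_ext f (pscale c x) = pscale c (lin_ext f x)"
proof -
  have "lin_ext f (pscale c x) = (\<Sum>a\<in>Poly_Mapping.keys x. pscale (Poly_Mapping.lookup (pscale c x) a) (f a))"
    by (rule lin_ext_superset) (auto simp: in_keys_iff)
  then show ?thesis by (simp add: lin_ext_def pscale_sum)
qed

lemma lin_ext_single [simp]: "lin_ext f (Poly_Mapping.single a c) = pscale c (f a)"
proof -
  have "lin_ext f (Poly_Mapping.single a c) = (\<Sum>b\<in>{a}. pscale (Poly_Mapping.lookup (Poly_Mapping.single a c) b) (f b))"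
    by (rule lin_ext_superset) auto
  then show ?thesis by simp
qed

lemma lin_ext_zero [simp]: "lin_ext f 0 = 0"
  by (simp add: lin_ext_def)

lemma lin_ext_ebasis [simp]: "lin_ext f (ebasis a) = f a"
  by (simp add: ebasis_def)

lemma lin_ext_fadd: "lin_ext (\<lambda>a. f a + g a) x = lin_ext f x + lin_ext g x"
  by (simp add: lin_ext_def pscale_add sum.distrib)

lemma lin_ext_fpscale: "lin_ext (\<lambda>a. pscale c (f a)) x = pscale c (lin_ext f x)"
  by (simp add: lin_ext_def pscale_sum mult.commute)

lemma lin_ext_cong: "(\<And>a. a \<in> Poly_Mapping.keys x \<Longrightarrow> f a = g a) \<Longrightarrow> lin_ext f x = lin_ext g x"
  by (simp add: lin_ext_def)

lemma lin_ext_ebasis_id: "lin_ext ebasis x = x"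
proof (rule poly_mapping_eqI)
  fix k
  have "Poly_Mapping.lookup (lin_ext ebasis x) k = (\<Sum>a\<in>Poly_Mapping.keys x. Poly_Mapping.lookup x a * (if a = k then 1 else 0))"
    unfolding lin_ext_def lookup_sum ebasis_def by (simp only: lookup_pscale lookup_single when_def)
  also have "\<dots> = (\<Sum>a\<in>Poly_Mapping.keys x. if a = k then Poly_Mapping.lookup x a else 0)"
    by (rule sum.cong) auto
  also have "\<dots> = (if k \<in> Poly_Mapping.keys x then Poly_Mapping.lookup x k else 0)"
    by (rule sum.delta) simp
  also have "\<dots> = Poly_Mapping.lookup x k" by (simp add: in_keys_iff)
  finally show "Poly_Mapping.lookup (lin_ext ebasis x) k = Poly_Mapping.lookup x k" .
qed

abbreviation klin :: "(('a \<Rightarrow>\<^sub>0 'k::comm_ring_1) \<Rightarrow> ('b \<Rightarrow>\<^sub>0 'k)) \<Rightarrow> bool" where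
  "klin g \<equiv> lin_on UNIV g"

lemma klinI: "(\<And>x y. g (x + y) = g x + g y) \<Longrightarrow> (\<And>c x. g (pscale c x) = pscale c (g x)) \<Longrightarrow> klin g"
  by (simp add: lin_on_def)

lemma klin_add: "klin g \<Longrightarrow> g (x + y) = g x + g y"
  by (simp add: lin_on_def)

lemma klin_pscale: "klin g \<Longrightarrow> g (pscale c x) = pscale c (g x)"
  by (simp add: lin_on_def)

lemma klin_zero: "klin g \<Longrightarrow> g 0 = 0"
  using klin_pscale[of g 0 0] by simp

lemma klin_sum: "klin g \<Longrightarrow> g (sum f A) = (\<Sum>i\<in>A. g (f i))"
proof (induction A rule: infinite_finite_induct)
  case (infinite A) then show ?case by (simp add: klin_zero)
next
  case empty then show ?case by (simp add: klin_zero)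
next
  case (insert a A) then show ?case by (simp add: klin_add)
qed

lemma klin_lin_ext_commute: "klin g \<Longrightarrow> g (lin_ext f x) = lin_ext (\<lambda>a. g (f a)) x"
  by (simp add: lin_ext_def klin_sum klin_pscale)

lemma klin_expand: "klin g \<Longrightarrow> g x = lin_ext (\<lambda>a. g (ebasis a)) x"
  using klin_lin_ext_commute[of g ebasis x] by (simp add: lin_ext_ebasis_id)

lemma klin_eq_on_keys:
  assumes "klin g" "klin h" "\<And>a. a \<in> Poly_Mapping.keys x \<Longrightarrow> g (ebasis a) = h (ebasis a)"
  shows "g x = h x"
  using klin_expand[OF assms(1), of x] klin_expand[OF assms(2), of x] lin_ext_cong[of x] assms(3)
  by metis

lemma klin2_eq_on_keys:
  assumes "\<And>a b. a \<in> Poly_Mapping.keys x \<Longrightarrow> b \<in> Poly_Mapping.keys y \<Longrightarrow>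
      f (ebasis a) (ebasis b) = g (ebasis a) (ebasis b)"
    and "\<And>y. klin (\<lambda>x. f x y)" "\<And>x. klin (f x)" "\<And>y. klin (\<lambda>x. g x y)" "\<And>x. klin (g x)"
  shows "f x y = g x y"
proof (rule klin_eq_on_keys[of "\<lambda>x. f x y" "\<lambda>x. g x y"])
  show "klin (\<lambda>x. f x y)" "klin (\<lambda>x. g x y)" by (fact assms(2), fact assms(4))
  fix a assume a: "a \<in> Poly_Mapping.keys x"
  show "f (ebasis a) y = g (ebasis a) y"
    by (rule klin_eq_on_keys[OF assms(3)[of "ebasis a"] assms(5)[of "ebasis a"]]) (rule assms(1)[OF a])
qed

lemma klin_diff: "klin g \<Longrightarrow> g (x - y) = g x - g y"
proof -
  assume g: "klin g"
  have "x - y = x + pscale (-1) y" by (rule poly_mapping_eqI) (simp add: lookup_add lookup_minus)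
  then have "g (x - y) = g (x + pscale (-1) y)" by (rule arg_cong)
  also have "\<dots> = g x + pscale (-1) (g y)" by (simp only: klin_add[OF g] klin_pscale[OF g])
  also have "\<dots> = g x - g y" by (simp add: pscale_minus_one)
  finally show ?thesis .
qed

lemma klin_lin_ext: "klin (lin_ext f)"
  by (rule klinI) (simp_all add: lin_ext_add lin_ext_pscale)

lemma klin_comp: "klin g \<Longrightarrow> klin h \<Longrightarrow> klin (\<lambda>x. g (h x))"
  by (rule klinI) (simp_all add: klin_add klin_pscale)

lemma klin_plus: "klin g \<Longrightarrow> klin h \<Longrightarrow> klin (\<lambda>x. g x + h x)"
  by (rule klinI) (simp_all add: klin_add klin_pscale pscale_add)

lemma klin_id: "klin (\<lambda>x. x)"
  by (rule klinI) simp_all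

lemma klin_zero_map: "klin (\<lambda>x. 0)"
  by (rule klinI) simp_all

lemma klin_lin_ext_param: "(\<And>a. klin (\<lambda>y. F a y)) \<Longrightarrow> klin (\<lambda>y. lin_ext (\<lambda>a. F a y) x)"
  by (rule klinI) (simp_all add: klin_add klin_pscale lin_ext_fadd lin_ext_fpscale)

section \<open>Tensor powers of \<open>B\<close>\<close>

lemma tens_space_iff: "x \<in> tens_space n \<longleftrightarrow> (\<forall>a\<in>Poly_Mapping.keys x. length a = n)"
  by (simp add: tens_space_def)

lemma tens_space_zero [simp]: "0 \<in> tens_space n"
  by (simp add: tens_space_def)

lemma tens_space_add: "x \<in> tens_space n \<Longrightarrow> y \<in> tens_space n \<Longrightarrow> x + y \<in> tens_space n"
  by (auto simp: tens_space_def dest: subsetD[OF keys_add])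

lemma tens_space_pscale: "x \<in> tens_space n \<Longrightarrow> pscale c x \<in> tens_space n"
  by (auto simp: tens_space_def dest: subsetD[OF keys_pscale])

lemma tens_space_sum: "(\<And>i. i \<in> A \<Longrightarrow> f i \<in> tens_space n) \<Longrightarrow> sum f A \<in> tens_space n"
  by (induction A rule: infinite_finite_induct) (auto intro: tens_space_add)

lemma tens_space_single: "length a = n \<Longrightarrow> Poly_Mapping.single a c \<in> tens_space n"
  by (simp add: tens_space_def)

lemma tens_space_ebasis: "length a = n \<Longrightarrow> ebasis a \<in> tens_space n"
  by (simp add: ebasis_def tens_space_single)

lemma tens_space_lin_ext: "(\<And>a. a \<in> Poly_Mapping.keys x \<Longrightarrow> f a \<in> tens_space n) \<Longrightarrow> lin_ext f x \<in> tens_space n"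
  unfolding lin_ext_def by (intro tens_space_sum tens_space_pscale) auto

lemma tens_space_diff:
  assumes "x \<in> tens_space n" "y \<in> tens_space n" shows "x - y \<in> tens_space n"
  unfolding tens_space_def
proof (intro CollectI ballI)
  fix a assume "a \<in> Poly_Mapping.keys (x - y)"
  then show "length a = n" using assms
    by (cases "Poly_Mapping.lookup x a = 0") (auto simp: tens_space_def in_keys_iff lookup_minus)
qed

lemma lin_on_expand:
  assumes "lin_on (tens_space n) g" "x \<in> tens_space n"
  shows "g x = lin_ext (\<lambda>a. g (ebasis a)) x"
proof -
  have add: "g (u + v) = g u + g v" if "u \<in> tens_space n" "v \<in> tens_space n" for u v
    using assms(1) that by (simp add: lin_on_def)
  have sc: "g (pscale c u) = pscale c (g u)" if "u \<in> tens_space n" for c u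
    using assms(1) that by (simp add: lin_on_def)
  have z: "g 0 = 0" using sc[of 0 0] by simp
  have sm: "g (sum f A) = (\<Sum>i\<in>A. g (f i))" if "\<And>i. i \<in> A \<Longrightarrow> f i \<in> tens_space n" for f A
    using that
  proof (induction A rule: infinite_finite_induct)
    case (infinite A) then show ?case by (simp add: z)
  next
    case empty then show ?case by (simp add: z)
  next
    case (insert a A) then show ?case by (simp add: add tens_space_sum)
  qed
  have mem: "ebasis a \<in> tens_space n" if "a \<in> Poly_Mapping.keys x" for a
    using assms(2) that by (intro tens_space_ebasis) (simp add: tens_space_def)
  have "g (lin_ext ebasis x) = (\<Sum>a\<in>Poly_Mapping.keys x. g (pscale (Poly_Mapping.lookup x a) (ebasis a)))"
    unfolding lin_ext_def by (rule sm) (rule tens_space_pscale[OF mem])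
  also have "\<dots> = (\<Sum>a\<in>Poly_Mapping.keys x. pscale (Poly_Mapping.lookup x a) (g (ebasis a)))"
    by (rule sum.cong[OF refl]) (simp add: sc mem)
  also have "\<dots> = lin_ext (\<lambda>a. g (ebasis a)) x" by (simp add: lin_ext_def)
  finally show ?thesis by (simp add: lin_ext_ebasis_id)
qed

lemma tprod_lin_ext: "tprod x y = lin_ext (\<lambda>a. lin_ext (\<lambda>b. ebasis (a @ b)) y) x"
  by (simp add: tprod_def lin_ext_def pscale_sum ebasis_def)

lemma klin_tprod_left: "klin (\<lambda>x. tprod x y)"
  unfolding tprod_lin_ext by (rule klin_lin_ext)

lemma klin_tprod_right: "klin (\<lambda>y. tprod x y)"
  unfolding tprod_lin_ext by (rule klin_lin_ext_param) (rule klin_lin_ext)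

lemma tprod_ebasis [simp]: "tprod (ebasis a) (ebasis b) = ebasis (a @ b)"
  by (simp add: tprod_lin_ext)

lemma tens_space_tprod: "x \<in> tens_space m \<Longrightarrow> y \<in> tens_space n \<Longrightarrow> tprod x y \<in> tens_space (m + n)"
  unfolding tprod_lin_ext
  by (intro tens_space_lin_ext tens_space_ebasis) (auto simp: tens_space_def)

lemma tprod_zero_left [simp]: "tprod 0 y = 0" and tprod_zero_right [simp]: "tprod x 0 = 0"
  by (simp_all add: tprod_def)

lemma tprod_assoc: "tprod (tprod x y) z = tprod x (tprod y z)"
proof -
  have "tprod (tprod x y) z = tprod x (tprod y z)" for x
  proof (rule klin_eq_on_keys[of "\<lambda>x. tprod (tprod x y) z" "\<lambda>x. tprod x (tprod y z)"])
    show "klin (\<lambda>x. tprod (tprod x y) z)" by (intro klin_comp[OF klin_tprod_left klin_tprod_left])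
    show "klin (\<lambda>x. tprod x (tprod y z))" by (rule klin_tprod_left)
    fix a
    show "tprod (tprod (ebasis a) y) z = tprod (ebasis a) (tprod y z)"
    proof (rule klin_eq_on_keys[of "\<lambda>y. tprod (tprod (ebasis a) y) z" "\<lambda>y. tprod (ebasis a) (tprod y z)"])
      show "klin (\<lambda>y. tprod (tprod (ebasis a) y) z)" by (intro klin_comp[OF klin_tprod_left klin_tprod_right])
      show "klin (\<lambda>y. tprod (ebasis a) (tprod y z))" by (intro klin_comp[OF klin_tprod_right klin_tprod_left])
      fix b
      show "tprod (tprod (ebasis a) (ebasis b)) z = tprod (ebasis a) (tprod (ebasis b) z)"
      proof (rule klin_eq_on_keys[of "\<lambda>z. tprod (tprod (ebasis a) (ebasis b)) z" "\<lambda>z. tprod (ebasis a) (tprod (ebasis b) z)"])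
        show "klin (\<lambda>z. tprod (tprod (ebasis a) (ebasis b)) z)" by (rule klin_tprod_right)
        show "klin (\<lambda>z. tprod (ebasis a) (tprod (ebasis b) z))" by (intro klin_comp[OF klin_tprod_right klin_tprod_right])
      qed simp
    qed
  qed
  then show ?thesis .
qed

lemma tprod_unit_left [simp]: "tprod (ebasis []) y = y"
  by (rule klin_eq_on_keys[OF klin_tprod_right klin_id]) simp

lemma tprod_unit_right [simp]: "tprod x (ebasis []) = x"
  by (rule klin_eq_on_keys[OF klin_tprod_left klin_id]) simp

lemma lookup_tprod:
  assumes "x \<in> tens_space m"
  shows "Poly_Mapping.lookup (tprod x y) k = (if m \<le> length k then Poly_Mapping.lookup x (take m k) * Poly_Mapping.lookup y (drop m k) else 0)"
proof -
  have "Poly_Mapping.lookup (tprod x y) k = (\<Sum>a\<in>Poly_Mapping.keys x. \<Sum>b\<in>Poly_Mapping.keys y. if a @ b = k then Poly_Mapping.lookup x a * Poly_Mapping.lookup y b else 0)"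
    by (simp add: tprod_def lookup_sum lookup_single when_def eq_commute)
  also have "\<dots> = (\<Sum>a\<in>Poly_Mapping.keys x. \<Sum>b\<in>Poly_Mapping.keys y. if m \<le> length k \<and> a = take m k \<and> b = drop m k then Poly_Mapping.lookup x a * Poly_Mapping.lookup y b else 0)"
  proof (intro sum.cong refl)
    fix a b assume "a \<in> Poly_Mapping.keys x"
    then have "length a = m" using assms by (simp add: tens_space_def)
    then have "a @ b = k \<longleftrightarrow> m \<le> length k \<and> a = take m k \<and> b = drop m k"
      using append_eq_conv_conj[of a b k] by (cases "m \<le> length k") auto
    then show "(if a @ b = k then Poly_Mapping.lookup x a * Poly_Mapping.lookup y b else 0) =
      (if m \<le> length k \<and> a = take m k \<and> b = drop m k then Poly_Mapping.lookup x a * Poly_Mapping.lookup y b else 0)" by simp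
  qed
  also have "\<dots> = (if m \<le> length k then Poly_Mapping.lookup x (take m k) * Poly_Mapping.lookup y (drop m k) else 0)"
  proof (cases "m \<le> length k")
    case True
    have "(\<Sum>a\<in>Poly_Mapping.keys x. \<Sum>b\<in>Poly_Mapping.keys y. if m \<le> length k \<and> a = take m k \<and> b = drop m k then Poly_Mapping.lookup x a * Poly_Mapping.lookup y b else 0)
      = (\<Sum>a\<in>Poly_Mapping.keys x. if a = take m k then (\<Sum>b\<in>Poly_Mapping.keys y. if b = drop m k then Poly_Mapping.lookup x a * Poly_Mapping.lookup y b else 0) else 0)"
      using True by (intro sum.cong refl) auto
    also have "\<dots> = (\<Sum>a\<in>Poly_Mapping.keys x. if a = take m k then Poly_Mapping.lookup x a * Poly_Mapping.lookup y (drop m k) else 0)"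
      by (intro sum.cong refl) (auto simp: in_keys_iff)
    also have "\<dots> = Poly_Mapping.lookup x (take m k) * Poly_Mapping.lookup y (drop m k)"
      by (auto simp: in_keys_iff)
    finally show ?thesis using True by simp
  qed simp
  finally show ?thesis .
qed

lemma lift1_lin_ext: "lift1 b = lin_ext (\<lambda>j. ebasis [j]) b"
  by (simp add: lift1_def lin_ext_def ebasis_def)

lemma klin_lift1: "klin lift1"
  unfolding lift1_lin_ext[abs_def] by (rule klin_lin_ext)

lemma lift1_ebasis [simp]: "lift1 (ebasis j) = ebasis [j]"
  by (simp add: lift1_lin_ext)

lemma tens_space_lift1: "lift1 b \<in> tens_space 1"
  unfolding lift1_lin_ext by (intro tens_space_lin_ext tens_space_ebasis) simp

lemma pure_Nil [simp]: "pure [] = ebasis []"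
  by (simp add: pure_def ebasis_def)

lemma pure_Cons: "pure (b # bs) = tprod (lift1 b) (pure bs)"
  by (simp add: pure_def)

lemma tens_space_pure: "pure bs \<in> tens_space (length bs)"
proof (induction bs)
  case Nil then show ?case by (simp add: tens_space_ebasis)
next
  case (Cons b bs)
  then show ?case using tens_space_tprod[OF tens_space_lift1 Cons.IH] by (simp add: pure_Cons)
qed

lemma pure_append: "pure (xs @ ys) = tprod (pure xs) (pure ys)"
  by (induction xs) (simp_all add: pure_Cons tprod_assoc)

lemma pure_single: "pure [b] = lift1 b"
  by (simp add: pure_Cons)

lemma pure_ebasis: "pure (map ebasis a) = ebasis a"
proof (induction a)
  case Nil then show ?case by simp
next
  case (Cons j a)
  then show ?case by (simp add: pure_Cons)
qed

lemma klin_starT: "klin (starT f)"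
  unfolding starT_def[abs_def] by (rule klin_lin_ext)

lemma starT_ebasis: "starT f (ebasis a) = pure (map (\<lambda>j. f (ebasis j)) a)"
  by (simp add: starT_def)

lemma tens_space_starT: "x \<in> tens_space n \<Longrightarrow> starT f x \<in> tens_space n"
  unfolding starT_def
  by (intro tens_space_lin_ext) (metis length_map tens_space_iff tens_space_pure)

lemma starT_tprod: "starT f (tprod x y) = tprod (starT f x) (starT f y)"
proof (rule klin_eq_on_keys[of "\<lambda>x. starT f (tprod x y)" "\<lambda>x. tprod (starT f x) (starT f y)"])
  show "klin (\<lambda>x. starT f (tprod x y))" by (rule klin_comp[OF klin_starT klin_tprod_left])
  show "klin (\<lambda>x. tprod (starT f x) (starT f y))" by (rule klin_comp[OF klin_tprod_left klin_starT])
  fix a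
  show "starT f (tprod (ebasis a) y) = tprod (starT f (ebasis a)) (starT f y)"
  proof (rule klin_eq_on_keys[of "\<lambda>y. starT f (tprod (ebasis a) y)" "\<lambda>y. tprod (starT f (ebasis a)) (starT f y)"])
    show "klin (\<lambda>y. starT f (tprod (ebasis a) y))" by (rule klin_comp[OF klin_starT klin_tprod_right])
    show "klin (\<lambda>y. tprod (starT f (ebasis a)) (starT f y))" by (rule klin_comp[OF klin_tprod_right klin_starT])
  qed (simp add: starT_ebasis pure_append)
qed

lemma starT_lift1: "klin f \<Longrightarrow> starT f (lift1 b) = lift1 (f b)"
  by (rule klin_eq_on_keys[OF klin_comp[OF klin_starT klin_lift1] klin_comp[OF klin_lift1]])
    (simp_all add: starT_ebasis pure_single)

lemma starT_pure: "klin f \<Longrightarrow> starT f (pure bs) = pure (map f bs)"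
proof (induction bs)
  case Nil then show ?case by (simp add: starT_ebasis)
next
  case (Cons b bs)
  then show ?case by (simp add: pure_Cons starT_tprod starT_lift1)
qed

lemma starT_comp: "klin f \<Longrightarrow> starT f (starT g x) = starT (\<lambda>y. f (g y)) x"
  by (rule klin_eq_on_keys[OF klin_comp[OF klin_starT klin_starT] klin_starT])
    (simp add: starT_ebasis starT_pure comp_def)

lemma starT_id: "starT (\<lambda>y. y) x = x"
  by (rule klin_eq_on_keys[OF klin_starT klin_id]) (simp add: starT_ebasis pure_ebasis)



definition mulT_basis :: "(('j \<Rightarrow>\<^sub>0 'k) \<Rightarrow> ('j \<Rightarrow>\<^sub>0 'k) \<Rightarrow> ('j \<Rightarrow>\<^sub>0 'k::comm_ring_1)) \<Rightarrow> 'j list \<Rightarrow> 'j list \<Rightarrow> ('j list \<Rightarrow>\<^sub>0 'k)" where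
  "mulT_basis mulB a b = (if length a = length b then pure (map2 (\<lambda>i j. mulB (ebasis i) (ebasis j)) a b) else 0)"

lemma mulT_lin_ext: "mulT mulB x y = lin_ext (\<lambda>a. lin_ext (\<lambda>b. mulT_basis mulB a b) y) x"
  by (simp add: mulT_def lin_ext_def pscale_sum mulT_basis_def)

lemma klin_mulT_left: "klin (\<lambda>x. mulT mulB x y)"
  unfolding mulT_lin_ext by (rule klin_lin_ext)

lemma klin_mulT_right: "klin (\<lambda>y. mulT mulB x y)"
  unfolding mulT_lin_ext by (rule klin_lin_ext_param) (rule klin_lin_ext)

lemma mulT_ebasis: "mulT mulB (ebasis a) (ebasis b) = mulT_basis mulB a b"
  by (simp add: mulT_lin_ext)

lemma tens_space_mulT_basis: "length a = n \<Longrightarrow> length b = n \<Longrightarrow> mulT_basis mulB a b \<in> tens_space n"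
  unfolding mulT_basis_def using tens_space_pure[of "map2 (\<lambda>i j. mulB (ebasis i) (ebasis j)) a b"] by simp

lemma tens_space_mulT: "x \<in> tens_space n \<Longrightarrow> y \<in> tens_space n \<Longrightarrow> mulT mulB x y \<in> tens_space n"
  unfolding mulT_lin_ext
  by (intro tens_space_lin_ext tens_space_mulT_basis) (auto simp: tens_space_def)

lemma klin_mulB_left: "K_algebra_B mulB oneB \<Longrightarrow> klin (\<lambda>x. mulB x y)"
  by (rule klinI) (simp_all add: K_algebra_B_def)

lemma klin_mulB_right: "K_algebra_B mulB oneB \<Longrightarrow> klin (\<lambda>y. mulB x y)"
  by (rule klinI) (simp_all add: K_algebra_B_def)

lemma mulT_tprod_lift:
  assumes B: "K_algebra_B mulB oneB" and P: "P \<in> tens_space n" and Q: "Q \<in> tens_space n"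
  shows "mulT mulB (tprod (lift1 x) P) (tprod (lift1 y) Q) = tprod (lift1 (mulB x y)) (mulT mulB P Q)"
proof -
  have basis: "mulT mulB (tprod (ebasis [i]) P) (tprod (ebasis [j]) Q) =
      tprod (lift1 (mulB (ebasis i) (ebasis j))) (mulT mulB P Q)" for i j
  proof (rule klin2_eq_on_keys[where f = "\<lambda>P Q. mulT mulB (tprod (ebasis [i]) P) (tprod (ebasis [j]) Q)"
        and g = "\<lambda>P Q. tprod (lift1 (mulB (ebasis i) (ebasis j))) (mulT mulB P Q)"])
    fix a b assume "a \<in> Poly_Mapping.keys P" "b \<in> Poly_Mapping.keys Q"
    then have "length a = n" "length b = n" using P Q by (simp_all add: tens_space_def)
    then show "mulT mulB (tprod (ebasis [i]) (ebasis a)) (tprod (ebasis [j]) (ebasis b)) =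
        tprod (lift1 (mulB (ebasis i) (ebasis j))) (mulT mulB (ebasis a) (ebasis b))"
      by (simp add: mulT_ebasis mulT_basis_def pure_Cons)
  qed (rule klin_comp[OF klin_mulT_left klin_tprod_right] klin_comp[OF klin_mulT_right klin_tprod_right]
      klin_comp[OF klin_tprod_right klin_mulT_left] klin_comp[OF klin_tprod_right klin_mulT_right])+
  show ?thesis
    by (rule klin2_eq_on_keys[where f = "\<lambda>x y. mulT mulB (tprod (lift1 x) P) (tprod (lift1 y) Q)"
          and g = "\<lambda>x y. tprod (lift1 (mulB x y)) (mulT mulB P Q)"])
      (simp_all add: basis klin_comp[OF klin_mulT_left klin_comp[OF klin_tprod_left klin_lift1]]
        klin_comp[OF klin_mulT_right klin_comp[OF klin_tprod_left klin_lift1]]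
        klin_comp[OF klin_tprod_left klin_comp[OF klin_lift1 klin_mulB_left[OF B]]]
        klin_comp[OF klin_tprod_left klin_comp[OF klin_lift1 klin_mulB_right[OF B]]])
qed

lemma mulT_pure:
  assumes B: "K_algebra_B mulB oneB"
  shows "length xs = length ys \<Longrightarrow> mulT mulB (pure xs) (pure ys) = pure (map2 mulB xs ys)"
proof (induction xs ys rule: list_induct2)
  case Nil then show ?case by (simp add: mulT_ebasis mulT_basis_def)
next
  case (Cons x xs y ys)
  have "pure xs \<in> tens_space (length xs)" "pure ys \<in> tens_space (length xs)"
    using tens_space_pure[of xs] tens_space_pure[of ys] Cons.hyps by auto
  then show ?case using Cons.IH by (simp add: pure_Cons mulT_tprod_lift[OF B])
qed

lemma map_anti_map2:
  assumes "\<And>u v. s (m u v) = m (s v) (s u)"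
  shows "length a = length b \<Longrightarrow> map s (map2 (\<lambda>i j. m (g i) (g j)) a b) = map2 m (map (\<lambda>j. s (g j)) b) (map (\<lambda>j. s (g j)) a)"
  by (induction a b rule: list_induct2) (simp_all add: assms)

lemma starT_mulT:
  assumes B: "K_algebra_B mulB oneB" and star: "anti_automorphism_B mulB oneB starB"
    and x: "x \<in> tens_space n" and y: "y \<in> tens_space n"
  shows "starT starB (mulT mulB x y) = mulT mulB (starT starB y) (starT starB x)"
proof (rule klin2_eq_on_keys[where f = "\<lambda>x y. starT starB (mulT mulB x y)" and g = "\<lambda>x y. mulT mulB (starT starB y) (starT starB x)"])
  have ks: "klin starB" and anti: "\<And>u v. starB (mulB u v) = mulB (starB v) (starB u)"
    using star by (simp_all add: anti_automorphism_B_def)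
  fix a b assume "a \<in> Poly_Mapping.keys x" "b \<in> Poly_Mapping.keys y"
  then have la: "length a = n" and lb: "length b = n" using x y by (simp_all add: tens_space_def)
  let ?e = "\<lambda>j. starB (ebasis j)"
  have "starT starB (mulT mulB (ebasis a) (ebasis b)) = pure (map starB (map2 (\<lambda>i j. mulB (ebasis i) (ebasis j)) a b))"
    using la lb by (simp add: mulT_ebasis mulT_basis_def starT_pure[OF ks])
  also have "\<dots> = pure (map2 mulB (map ?e b) (map ?e a))"
    by (simp only: map_anti_map2[where s = starB and m = mulB, OF anti] la lb)
  also have "\<dots> = mulT mulB (starT starB (ebasis b)) (starT starB (ebasis a))"
    by (simp add: mulT_pure[OF B] la lb starT_ebasis)
  finally show "starT starB (mulT mulB (ebasis a) (ebasis b)) = mulT mulB (starT starB (ebasis b)) (starT starB (ebasis a))" .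
qed (rule klin_comp[OF klin_starT klin_mulT_left] klin_comp[OF klin_starT klin_mulT_right]
    klin_comp[OF klin_mulT_right klin_starT] klin_comp[OF klin_mulT_left klin_starT])+

lemma tens_space_oneT: "oneT oneB d \<in> tens_space d"
  unfolding oneT_def using tens_space_pure[of "replicate d oneB"] by simp

lemma starT_oneT:
  assumes star: "anti_automorphism_B mulB oneB starB"
  shows "starT starB (oneT oneB d) = oneT oneB d"
proof -
  have gs: "klin starB" and so: "starB oneB = oneB" using star by (simp_all add: anti_automorphism_B_def)
  show ?thesis unfolding oneT_def by (simp add: starT_pure[OF gs] so)
qed

lemma tens_space_emb:
  assumes "1 \<le> i" "i < d" "Z \<in> tens_space 2"
  shows "emb oneB d i Z \<in> tens_space d"
proof -
  have "emb oneB d i Z \<in> tens_space ((i - 1) + (2 + (d - i - 1)))"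
    unfolding emb_def by (intro tens_space_tprod tens_space_pure[of "replicate _ oneB", simplified] assms(3))
  moreover have e: "(i - 1) + (2 + (d - i - 1)) = d" using assms by simp
  ultimately show ?thesis by (simp only: e)
qed

lemma klin_emb: "klin (emb oneB d i)"
  unfolding emb_def[abs_def] by (rule klin_comp[OF klin_tprod_right klin_tprod_left])

lemma starT_emb:
  assumes star: "anti_automorphism_B mulB oneB starB"
  shows "starT starB (emb oneB d i Z) = emb oneB d i (starT starB Z)"
proof -
  have gs: "klin starB" and so: "starB oneB = oneB" using star by (simp_all add: anti_automorphism_B_def)
  show ?thesis unfolding emb_def by (simp add: starT_tprod starT_pure[OF gs] so)
qed

lemma klin_loc: "klin (loc i \<phi>)"
  unfolding loc_def[abs_def] by (rule klin_lin_ext)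

lemma loc_ebasis: "loc i \<phi> (ebasis a) = tprod (ebasis (take (i - 1) a)) (tprod (\<phi> (ebasis [a ! (i - 1), a ! i])) (ebasis (drop (i + 1) a)))"
  by (simp add: loc_def)

lemma take_nth_nth_drop:
  assumes "1 \<le> i" "i < length a"
  shows "take (i - 1) a @ [a ! (i - 1), a ! i] @ drop (i + 1) a = a"
proof -
  have "a ! i # drop (i + 1) a = drop i a" using assms Cons_nth_drop_Suc[of i a] by simp
  moreover have "a ! (i - 1) # drop i a = drop (i - 1) a" using assms Cons_nth_drop_Suc[of "i - 1" a] by simp
  ultimately show ?thesis by simp
qed

lemma ebasis_split_at:
  assumes "1 \<le> i" "i < length a"
  shows "ebasis a = tprod (ebasis (take (i - 1) a)) (tprod (ebasis [a ! (i - 1), a ! i]) (ebasis (drop (i + 1) a)))"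
  using take_nth_nth_drop[OF assms] by simp

lemma loc_tprod:
  assumes i: "1 \<le> i" and u: "u \<in> tens_space (i - 1)" and X: "X \<in> tens_space 2"
  shows "loc i \<phi> (tprod u (tprod X v)) = tprod u (tprod (lin_ext (\<lambda>a. \<phi> (ebasis a)) X) v)"
proof (rule klin_eq_on_keys[of "\<lambda>u. loc i \<phi> (tprod u (tprod X v))" "\<lambda>u. tprod u (tprod (lin_ext (\<lambda>a. \<phi> (ebasis a)) X) v)"])
  show "klin (\<lambda>u. loc i \<phi> (tprod u (tprod X v)))" by (rule klin_comp[OF klin_loc klin_tprod_left])
  show "klin (\<lambda>u. tprod u (tprod (lin_ext (\<lambda>a. \<phi> (ebasis a)) X) v))" by (rule klin_tprod_left)
  fix p assume p: "p \<in> Poly_Mapping.keys u"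
  have lp: "length p = i - 1" using p u by (simp add: tens_space_def)
  show "loc i \<phi> (tprod (ebasis p) (tprod X v)) = tprod (ebasis p) (tprod (lin_ext (\<lambda>a. \<phi> (ebasis a)) X) v)"
  proof (rule klin_eq_on_keys[of "\<lambda>X. loc i \<phi> (tprod (ebasis p) (tprod X v))" "\<lambda>X. tprod (ebasis p) (tprod (lin_ext (\<lambda>a. \<phi> (ebasis a)) X) v)"])
    show "klin (\<lambda>X. loc i \<phi> (tprod (ebasis p) (tprod X v)))"
      by (rule klin_comp[OF klin_loc klin_comp[OF klin_tprod_right klin_tprod_left]])
    show "klin (\<lambda>X. tprod (ebasis p) (tprod (lin_ext (\<lambda>a. \<phi> (ebasis a)) X) v))"
      by (rule klin_comp[OF klin_tprod_right klin_comp[OF klin_tprod_left klin_lin_ext]])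
    fix q assume q: "q \<in> Poly_Mapping.keys X"
    have lq: "length q = 2" using q X by (simp add: tens_space_def)
    then obtain q0 q1 where qq: "q = [q0, q1]"
      by (metis (no_types, lifting) One_nat_def Suc_length_conv length_0_conv numeral_2_eq_2)
    show "loc i \<phi> (tprod (ebasis p) (tprod (ebasis q) v)) = tprod (ebasis p) (tprod (lin_ext (\<lambda>a. \<phi> (ebasis a)) (ebasis q)) v)"
    proof (rule klin_eq_on_keys[of "\<lambda>v. loc i \<phi> (tprod (ebasis p) (tprod (ebasis q) v))" "\<lambda>v. tprod (ebasis p) (tprod (lin_ext (\<lambda>a. \<phi> (ebasis a)) (ebasis q)) v)"])
      show "klin (\<lambda>v. loc i \<phi> (tprod (ebasis p) (tprod (ebasis q) v)))"
        by (rule klin_comp[OF klin_loc klin_comp[OF klin_tprod_right klin_tprod_right]])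
      show "klin (\<lambda>v. tprod (ebasis p) (tprod (lin_ext (\<lambda>a. \<phi> (ebasis a)) (ebasis q)) v))"
        by (rule klin_comp[OF klin_tprod_right klin_tprod_right])
      fix r
      have t1: "take (i - 1) (p @ q @ r) = p" using lp by simp
      have t2: "(p @ q @ r) ! (i - 1) = q0" using lp qq by (simp add: nth_append)
      have ii: "i = Suc (length p)" using lp i by simp
      have t3: "(p @ q @ r) ! i = q1" using qq by (simp add: ii nth_append)
      have t4: "drop (i + 1) (p @ q @ r) = r" using lp qq i by simp
      show "loc i \<phi> (tprod (ebasis p) (tprod (ebasis q) (ebasis r))) =
        tprod (ebasis p) (tprod (lin_ext (\<lambda>a. \<phi> (ebasis a)) (ebasis q)) (ebasis r))"
      proof -
        have e3: "tprod (ebasis p) (tprod (ebasis q) (ebasis r)) = ebasis (p @ q @ r)" by simp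
        show ?thesis unfolding e3 loc_ebasis t1 t2 t3 t4 by (simp add: qq)
      qed
    qed
  qed
qed

lemma loc_emb:
  assumes "1 \<le> i" "Z \<in> tens_space 2"
  shows "loc i \<phi> (emb oneB d i Z) = emb oneB d i (lin_ext (\<lambda>a. \<phi> (ebasis a)) Z)"
  unfolding emb_def using tens_space_pure[of "replicate (i - 1) oneB"]
  by (simp add: loc_tprod[OF assms(1) _ assms(2)])

lemma tens_space_loc:
  assumes "1 \<le> i" "i < n" "x \<in> tens_space n" "\<And>q. length q = 2 \<Longrightarrow> \<phi> (ebasis q) \<in> tens_space 2"
  shows "loc i \<phi> x \<in> tens_space n"
  unfolding loc_def
proof (rule tens_space_lin_ext)
  fix a assume "a \<in> Poly_Mapping.keys x"
  then have la: "length a = n" using assms(3) by (simp add: tens_space_def)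
  have "tprod (ebasis (take (i - 1) a)) (tprod (\<phi> (ebasis [a ! (i - 1), a ! i])) (ebasis (drop (i + 1) a)))
    \<in> tens_space ((i - 1) + (2 + (n - (i + 1))))"
    by (intro tens_space_tprod tens_space_ebasis assms(4)) (use la assms in auto)
  moreover have e: "(i - 1) + (2 + (n - (i + 1))) = n" using assms la by simp
  ultimately show "tprod (ebasis (take (i - 1) a)) (tprod (\<phi> (ebasis [a ! (i - 1), a ! i])) (ebasis (drop (i + 1) a)))
    \<in> tens_space n" by (simp only: e)
qed

lemma lookup_lift1: "Poly_Mapping.lookup (lift1 b) [j] = Poly_Mapping.lookup b j"
  unfolding lift1_def lookup_sum by (simp add: lookup_single when_def in_keys_iff)

lemma mulB_zero_left: "K_algebra_B mulB oneB \<Longrightarrow> mulB 0 y = 0"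
  using klin_zero[OF klin_mulB_left] by blast

lemma oneB_faithful:
  fixes mulB :: "('j \<Rightarrow>\<^sub>0 'k::comm_ring_1) \<Rightarrow> ('j \<Rightarrow>\<^sub>0 'k) \<Rightarrow> ('j \<Rightarrow>\<^sub>0 'k)"
  assumes B: "K_algebra_B mulB oneB" and c: "\<And>j. c * Poly_Mapping.lookup oneB j = 0"
  shows "c = 0"
proof -
  have z: "pscale c oneB = 0" by (rule poly_mapping_eqI) (simp add: c)
  have z2: "pscale c (ebasis j) = 0" for j :: 'j
  proof -
    have "pscale c (ebasis j) = pscale c (mulB oneB (ebasis j))" using B by (simp add: K_algebra_B_def)
    also have "\<dots> = mulB (pscale c oneB) (ebasis j)" using B by (simp add: K_algebra_B_def)
    also have "\<dots> = 0" by (simp add: z mulB_zero_left[OF B])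
    finally show ?thesis .
  qed
  have "Poly_Mapping.lookup (pscale c (ebasis j)) j = 0" for j :: 'j unfolding z2 by simp
  then show ?thesis by (simp add: ebasis_def)
qed

lemma pure_ones_faithful:
  fixes mulB :: "('j \<Rightarrow>\<^sub>0 'k::comm_ring_1) \<Rightarrow> ('j \<Rightarrow>\<^sub>0 'k) \<Rightarrow> ('j \<Rightarrow>\<^sub>0 'k)"
  assumes B: "K_algebra_B mulB oneB"
  shows "(\<And>a. length a = m \<Longrightarrow> c * Poly_Mapping.lookup (pure (replicate m oneB)) a = 0) \<Longrightarrow> c = 0"
proof (induction m arbitrary: c)
  case 0
  then show ?case using "0.prems"[of "[]"] by (simp add: ebasis_def)
next
  case (Suc m)
  have "c * Poly_Mapping.lookup oneB j = 0" for j
  proof (rule Suc.IH)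
    fix a :: "'j list" assume la: "length a = m"
    have "Poly_Mapping.lookup (pure (replicate (Suc m) oneB)) (j # a) =
        Poly_Mapping.lookup oneB j * Poly_Mapping.lookup (pure (replicate m oneB)) a"
      by (simp add: pure_Cons lookup_tprod[OF tens_space_lift1] lookup_lift1)
    then show "c * Poly_Mapping.lookup oneB j * Poly_Mapping.lookup (pure (replicate m oneB)) a = 0"
      using Suc.prems[of "j # a"] la by (simp add: mult.assoc)
  qed
  then show ?case by (rule oneB_faithful[OF B])
qed

lemma lookup_emb:
  assumes Z: "Z \<in> tens_space 2" and u: "length u = i - 1" and q: "length q = 2"
  shows "Poly_Mapping.lookup (emb oneB d i Z) (u @ q @ v) =
    Poly_Mapping.lookup (pure (replicate (i - 1) oneB)) u * Poly_Mapping.lookup Z q *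
    Poly_Mapping.lookup (pure (replicate (d - i - 1) oneB)) v"
proof -
  have "pure (replicate (i - 1) oneB) \<in> tens_space (i - 1)"
    using tens_space_pure[of "replicate (i - 1) oneB"] by simp
  then show ?thesis using u q by (simp add: emb_def lookup_tprod[OF _] lookup_tprod[OF Z] mult.assoc)
qed

lemma emb_eq_0D:
  assumes B: "K_algebra_B mulB oneB" and Z: "Z \<in> tens_space 2" and e: "emb oneB d i Z = 0"
  shows "Z = 0"
proof (rule poly_mapping_eqI)
  fix q
  show "Poly_Mapping.lookup Z q = Poly_Mapping.lookup 0 q"
  proof (cases "length q = 2")
    case False
    then show ?thesis using Z by (auto simp: tens_space_def in_keys_iff)
  next
    case True
    let ?c = "Poly_Mapping.lookup Z q"
    have "?c * Poly_Mapping.lookup (pure (replicate (i - 1) oneB)) u = 0" if u: "length u = i - 1" for u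
    proof (rule pure_ones_faithful[OF B, of "d - i - 1"])
      fix v
      show "?c * Poly_Mapping.lookup (pure (replicate (i - 1) oneB)) u *
          Poly_Mapping.lookup (pure (replicate (d - i - 1) oneB)) v = 0"
        using lookup_emb[OF Z u True, where v = v and oneB = oneB and d = d] e by (simp add: ac_simps)
    qed
    then have "?c = 0" by (rule pure_ones_faithful[OF B])
    then show ?thesis by simp
  qed
qed

lemma emb_injective:
  assumes B: "K_algebra_B mulB oneB" and Z: "Z1 \<in> tens_space 2" "Z2 \<in> tens_space 2"
    and e: "emb oneB d i Z1 = emb oneB d i Z2"
  shows "Z1 = Z2"
proof -
  have "emb oneB d i (Z1 - Z2) = 0" using e by (simp add: klin_diff[OF klin_emb])
  then have "Z1 - Z2 = 0" by (rule emb_eq_0D[OF B tens_space_diff[OF Z]])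
  then show ?thesis by simp
qed



section \<open>The quantum wreath product\<close>

lemma anti_hom_W_add: "anti_hom_W smul \<phi> \<Longrightarrow> \<phi> (x + y) = \<phi> x + \<phi> y"
  and anti_hom_W_smul: "anti_hom_W smul \<phi> \<Longrightarrow> \<phi> (smul c x) = smul c (\<phi> x)"
  and anti_hom_W_one: "anti_hom_W smul \<phi> \<Longrightarrow> \<phi> 1 = 1"
  and anti_hom_W_mult: "anti_hom_W smul \<phi> \<Longrightarrow> \<phi> (x * y) = \<phi> y * \<phi> x"
  by (simp_all add: anti_hom_W_def)

lemma anti_hom_W_prod_list: "anti_hom_W smul \<phi> \<Longrightarrow> \<phi> (prod_list xs) = prod_list (rev (map \<phi> xs))"
  by (induction xs) (simp_all add: anti_hom_W_one anti_hom_W_mult)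


locale quantum_wreath =
  fixes mulB :: "('j \<Rightarrow>\<^sub>0 'k::comm_ring_1) \<Rightarrow> ('j \<Rightarrow>\<^sub>0 'k) \<Rightarrow> ('j \<Rightarrow>\<^sub>0 'k)"
    and oneB :: "'j \<Rightarrow>\<^sub>0 'k"
    and starB :: "('j \<Rightarrow>\<^sub>0 'k) \<Rightarrow> ('j \<Rightarrow>\<^sub>0 'k)"
    and S R :: "'j list \<Rightarrow>\<^sub>0 'k"
    and \<sigma> \<rho> :: "('j list \<Rightarrow>\<^sub>0 'k) \<Rightarrow> ('j list \<Rightarrow>\<^sub>0 'k)"
    and smul :: "'k \<Rightarrow> 'w::ring_1 \<Rightarrow> 'w"
    and iota :: "('j list \<Rightarrow>\<^sub>0 'k) \<Rightarrow> 'w"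
    and H :: "nat \<Rightarrow> 'w"
    and d :: nat
  assumes d2: "2 \<le> d"
    and B_alg: "K_algebra_B mulB oneB"
    and star_B: "anti_automorphism_B mulB oneB starB"
    and S_in: "S \<in> tens_space 2" and R_in: "R \<in> tens_space 2"
    and sigma_lin: "lin_on (tens_space 2) \<sigma>" and sigma_into: "\<sigma> ` tens_space 2 \<subseteq> tens_space 2"
    and rho_lin: "lin_on (tens_space 2) \<rho>" and rho_into: "\<rho> ` tens_space 2 \<subseteq> tens_space 2"
    and rels: "qwp_relations smul iota H d mulB oneB S R \<sigma> \<rho>"
    and PBW: "has_PBW_basis smul iota H d"
begin

abbreviation T where "T \<equiv> tens_space d"
abbreviation star where "star \<equiv> starT starB"

lemma K_algebra_smul: "K_algebra_W smul" using rels by (simp add: qwp_relations_def)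

lemma smul_add_r: "smul c (x + y) = smul c x + smul c y" using K_algebra_smul by (simp add: K_algebra_W_def)
lemma smul_add_l: "smul (c + c') x = smul c x + smul c' x" using K_algebra_smul by (simp add: K_algebra_W_def)
lemma smul_smul: "smul c (smul c' x) = smul (c * c') x" using K_algebra_smul by (simp add: K_algebra_W_def)
lemma smul_one [simp]: "smul 1 x = x" using K_algebra_smul by (simp add: K_algebra_W_def)
lemma smul_mult_both: "\<forall>c x y. smul c (x * y) = smul c x * y \<and> smul c (x * y) = x * smul c y"
  using K_algebra_smul unfolding K_algebra_W_def by blast
lemma smul_mult_l: "smul c x * y = smul c (x * y)" using smul_mult_both by metis
lemma smul_mult_r: "x * smul c y = smul c (x * y)" using smul_mult_both by metis
lemma smul_zero_l [simp]: "smul 0 x = 0"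
  using smul_add_l[of 0 0 x] by simp
lemma smul_zero_r [simp]: "smul c 0 = 0"
  using smul_add_r[of c 0 0] by simp
lemma smul_sum: "smul c (sum f A) = (\<Sum>i\<in>A. smul c (f i))"
  by (induction A rule: infinite_finite_induct) (simp_all add: smul_add_r)

lemma iota_add: "x \<in> T \<Longrightarrow> y \<in> T \<Longrightarrow> iota (x + y) = iota x + iota y"
  using rels by (simp add: qwp_relations_def)
lemma iota_mult: "x \<in> T \<Longrightarrow> y \<in> T \<Longrightarrow> iota (mulT mulB x y) = iota x * iota y"
  using rels by (simp add: qwp_relations_def)
lemma iota_pscale: "x \<in> T \<Longrightarrow> iota (pscale c x) = smul c (iota x)"
  using rels by (simp add: qwp_relations_def)
lemma iota_one: "iota (oneT oneB d) = 1"
  using rels by (simp add: qwp_relations_def)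
lemma iota_zero [simp]: "iota 0 = 0"
  using iota_add[of 0 0] by simp
lemma H_braid: "\<forall>k. 1 \<le> k \<and> k + 1 < d \<longrightarrow> H k * H (k + 1) * H k = H (k + 1) * H k * H (k + 1)"
  using rels by (simp add: qwp_relations_def)
lemma H_comm: "\<forall>i\<in>{1..<d}. \<forall>j\<in>{1..<d}. i + 2 \<le> j \<or> j + 2 \<le> i \<longrightarrow> H i * H j = H j * H i"
  using rels by (simp add: qwp_relations_def)
lemma H_quadratic: "i \<in> {1..<d} \<Longrightarrow> H i * H i = iota (emb oneB d i S) * H i + iota (emb oneB d i R)"
  using rels by (simp add: qwp_relations_def)
lemma H_iota_commute: "i \<in> {1..<d} \<Longrightarrow> b \<in> T \<Longrightarrow> H i * iota b = iota (loc i \<sigma> b) * H i + iota (loc i \<rho> b)"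
  using rels by (simp add: qwp_relations_def)

lemma iota_sum: "(\<And>i. i \<in> A \<Longrightarrow> f i \<in> T) \<Longrightarrow> iota (sum f A) = (\<Sum>i\<in>A. iota (f i))"
proof (induction A rule: infinite_finite_induct)
  case (insert a A) then show ?case by (simp add: iota_add tens_space_sum)
qed simp_all

lemma iota_expand: "x \<in> T \<Longrightarrow> iota x = (\<Sum>a\<in>Poly_Mapping.keys x. smul (Poly_Mapping.lookup x a) (iota (ebasis a)))"
proof -
  assume x: "x \<in> T"
  have m: "ebasis a \<in> T" if "a \<in> Poly_Mapping.keys x" for a
    using x that by (intro tens_space_ebasis) (simp add: tens_space_def)
  have "iota x = iota (lin_ext ebasis x)" by (simp add: lin_ext_ebasis_id)
  also have "\<dots> = (\<Sum>a\<in>Poly_Mapping.keys x. iota (pscale (Poly_Mapping.lookup x a) (ebasis a)))"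
    unfolding lin_ext_def by (rule iota_sum) (rule tens_space_pscale[OF m])
  also have "\<dots> = (\<Sum>a\<in>Poly_Mapping.keys x. smul (Poly_Mapping.lookup x a) (iota (ebasis a)))"
    by (rule sum.cong[OF refl]) (simp add: iota_pscale m)
  finally show ?thesis .
qed

lemma iota_lin_ext:
  assumes "\<And>a. a \<in> Poly_Mapping.keys x \<Longrightarrow> f a \<in> T"
  shows "iota (lin_ext f x) = (\<Sum>a\<in>Poly_Mapping.keys x. smul (Poly_Mapping.lookup x a) (iota (f a)))"
  unfolding lin_ext_def using assms by (simp add: iota_sum tens_space_pscale iota_pscale)

lemma prod_H_braid_eq: "braid_eq d u v \<Longrightarrow> prod_list (map H u) = prod_list (map H v)"
  by (rule braid_eq_prod_list[OF H_braid H_comm])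

lemma Hw_id: "Hw H d id = 1"
proof -
  have p: "id permutes {1..d}" by (rule permutes_id)
  have "braid_eq d (red_expr d id) []"
    by (rule matsumoto[OF reduced_red_expr[OF p] reduced_Nil]) (simp add: red_expr_props[OF p])
  then show ?thesis unfolding Hw_red_expr using prod_H_braid_eq by fastforce
qed

lemma Hw_sref: "i \<in> {1..<d} \<Longrightarrow> Hw H d (sref i) = H i"
proof -
  assume i: "i \<in> {1..<d}"
  have p: "sref i permutes {1..d}" by (rule sref_permutes[OF i])
  have "braid_eq d (red_expr d (sref i)) [i]"
    by (rule matsumoto[OF reduced_red_expr[OF p] reduced_single[OF i]]) (simp add: red_expr_props[OF p])
  then show ?thesis unfolding Hw_red_expr using prod_H_braid_eq by fastforce
qed

section \<open>PBW coordinates\<close>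

definition pbw_index :: "('j list \<times> (nat \<Rightarrow> nat)) set" where
  "pbw_index = {(a, w). length a = d \<and> w permutes {1..d}}"

definition pbw_elem :: "'j list \<times> (nat \<Rightarrow> nat) \<Rightarrow> 'w" where
  "pbw_elem p = iota (ebasis (fst p)) * Hw H d (snd p)"

definition pbw_sum :: "('j list \<times> (nat \<Rightarrow> nat) \<Rightarrow>\<^sub>0 'k) \<Rightarrow> 'w" where
  "pbw_sum f = (\<Sum>p\<in>Poly_Mapping.keys f. smul (Poly_Mapping.lookup f p) (pbw_elem p))"

definition pbw_coords :: "'w \<Rightarrow> ('j list \<times> (nat \<Rightarrow> nat) \<Rightarrow>\<^sub>0 'k)" where
  "pbw_coords z = (THE f. Poly_Mapping.keys f \<subseteq> pbw_index \<and> z = pbw_sum f)"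

lemma pbw_unique: "\<exists>!f. Poly_Mapping.keys f \<subseteq> pbw_index \<and> z = pbw_sum f"
proof -
  have "\<forall>x. \<exists>!f :: ('j list \<times> (nat \<Rightarrow> nat)) \<Rightarrow>\<^sub>0 'k.
        Poly_Mapping.keys f \<subseteq> {(a, w). length a = d \<and> w permutes {1..d}} \<and>
        x = (\<Sum>p\<in>Poly_Mapping.keys f. smul (Poly_Mapping.lookup f p) (iota (ebasis (fst p)) * Hw H d (snd p)))"
    using PBW unfolding has_PBW_basis_def .
  then show ?thesis unfolding pbw_index_def pbw_sum_def pbw_elem_def by (rule spec)
qed

lemma pbw_coords_spec: "Poly_Mapping.keys (pbw_coords z) \<subseteq> pbw_index \<and> z = pbw_sum (pbw_coords z)"
  unfolding pbw_coords_def by (rule theI'[OF pbw_unique])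

lemma pbw_coords_unique: "Poly_Mapping.keys f \<subseteq> pbw_index \<Longrightarrow> z = pbw_sum f \<Longrightarrow> pbw_coords z = f"
  unfolding pbw_coords_def by (rule the1_equality[OF pbw_unique]) simp

lemma pbw_sum_superset:
  assumes "finite A" "Poly_Mapping.keys f \<subseteq> A"
  shows "pbw_sum f = (\<Sum>p\<in>A. smul (Poly_Mapping.lookup f p) (pbw_elem p))"
  unfolding pbw_sum_def
  by (rule sum.mono_neutral_left) (use assms in \<open>auto simp: in_keys_iff\<close>)

lemma pbw_sum_add: "pbw_sum (f + g) = pbw_sum f + pbw_sum g"
proof -
  let ?A = "Poly_Mapping.keys f \<union> Poly_Mapping.keys g"
  have "pbw_sum (f + g) = (\<Sum>p\<in>?A. smul (Poly_Mapping.lookup (f + g) p) (pbw_elem p))"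
    by (rule pbw_sum_superset) (auto dest: subsetD[OF keys_add])
  also have "\<dots> = (\<Sum>p\<in>?A. smul (Poly_Mapping.lookup f p) (pbw_elem p)) + (\<Sum>p\<in>?A. smul (Poly_Mapping.lookup g p) (pbw_elem p))"
    by (simp add: lookup_add smul_add_l sum.distrib)
  also have "\<dots> = pbw_sum f + pbw_sum g" by (simp add: pbw_sum_superset[symmetric])
  finally show ?thesis .
qed

lemma pbw_sum_pscale: "pbw_sum (pscale c f) = smul c (pbw_sum f)"
proof -
  have "pbw_sum (pscale c f) = (\<Sum>p\<in>Poly_Mapping.keys f. smul (Poly_Mapping.lookup (pscale c f) p) (pbw_elem p))"
    by (rule pbw_sum_superset) (auto simp: in_keys_iff)
  then show ?thesis by (simp add: pbw_sum_def smul_sum smul_smul)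
qed

lemma keys_pbw_coords: "Poly_Mapping.keys (pbw_coords z) \<subseteq> pbw_index" using pbw_coords_spec[of z] by (rule conjunct1)
lemma pbw_sum_coords: "pbw_sum (pbw_coords z) = z" using conjunct2[OF pbw_coords_spec[of z]] by (rule sym)

lemma pbw_coords_add: "pbw_coords (x + y) = pbw_coords x + pbw_coords y"
proof (rule pbw_coords_unique)
  show "Poly_Mapping.keys (pbw_coords x + pbw_coords y) \<subseteq> pbw_index" using keys_pbw_coords[of x] keys_pbw_coords[of y] keys_add[of "pbw_coords x" "pbw_coords y"] by blast
  show "x + y = pbw_sum (pbw_coords x + pbw_coords y)" by (simp add: pbw_sum_add pbw_sum_coords)
qed

lemma pbw_coords_smul: "pbw_coords (smul c x) = pscale c (pbw_coords x)"
proof (rule pbw_coords_unique)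
  show "Poly_Mapping.keys (pscale c (pbw_coords x)) \<subseteq> pbw_index" using keys_pbw_coords[of x] keys_pscale[of c "pbw_coords x"] by blast
  show "smul c x = pbw_sum (pscale c (pbw_coords x))" by (simp add: pbw_sum_pscale pbw_sum_coords)
qed

definition pbw_column :: "(nat \<Rightarrow> nat) \<Rightarrow> ('j list \<Rightarrow>\<^sub>0 'k) \<Rightarrow> ('j list \<times> (nat \<Rightarrow> nat) \<Rightarrow>\<^sub>0 'k)" where
  "pbw_column w b = (\<Sum>a\<in>Poly_Mapping.keys b. Poly_Mapping.single (a, w) (Poly_Mapping.lookup b a))"

lemma lookup_pbw_column: "Poly_Mapping.lookup (pbw_column w b) (a, v) = (if v = w then Poly_Mapping.lookup b a else 0)"
proof -
  have "Poly_Mapping.lookup (pbw_column w b) (a, v) =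
      (\<Sum>a'\<in>Poly_Mapping.keys b. if a' = a \<and> w = v then Poly_Mapping.lookup b a' else 0)"
    by (simp add: pbw_column_def lookup_sum lookup_single when_def)
  also have "\<dots> = (if v = w then Poly_Mapping.lookup b a else 0)"
    by (cases "v = w") (auto simp: in_keys_iff)
  finally show ?thesis .
qed

lemma keys_pbw_column: "Poly_Mapping.keys (pbw_column w b) \<subseteq> Poly_Mapping.keys b \<times> {w}"
proof
  fix p assume "p \<in> Poly_Mapping.keys (pbw_column w b)"
  then show "p \<in> Poly_Mapping.keys b \<times> {w}"
    by (cases p) (auto simp: in_keys_iff lookup_pbw_column split: if_splits)
qed

lemma pbw_sum_column:
  assumes b: "b \<in> T"
  shows "pbw_sum (pbw_column w b) = iota b * Hw H d w"
proof -
  have "pbw_sum (pbw_column w b) = (\<Sum>p\<in>Poly_Mapping.keys b \<times> {w}. smul (Poly_Mapping.lookup (pbw_column w b) p) (pbw_elem p))"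
    by (rule pbw_sum_superset) (simp_all add: keys_pbw_column)
  also have "\<dots> = (\<Sum>a\<in>Poly_Mapping.keys b. smul (Poly_Mapping.lookup b a) (iota (ebasis a) * Hw H d w))"
  proof -
    have "Poly_Mapping.keys b \<times> {w} = (\<lambda>a. (a, w)) ` Poly_Mapping.keys b" by auto
    moreover have "inj_on (\<lambda>a. (a, w)) (Poly_Mapping.keys b)" by (auto simp: inj_on_def)
    ultimately show ?thesis by (simp add: sum.reindex lookup_pbw_column pbw_elem_def)
  qed
  also have "\<dots> = (\<Sum>a\<in>Poly_Mapping.keys b. smul (Poly_Mapping.lookup b a) (iota (ebasis a))) * Hw H d w"
    by (simp add: sum_distrib_right smul_mult_l)
  also have "\<dots> = iota b * Hw H d w" by (simp add: iota_expand[OF b])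
  finally show ?thesis .
qed

lemma pbw_coords_iota_Hw:
  assumes b: "b \<in> T" and w: "w permutes {1..d}"
  shows "pbw_coords (iota b * Hw H d w) = pbw_column w b"
proof (rule pbw_coords_unique)
  show "Poly_Mapping.keys (pbw_column w b) \<subseteq> pbw_index"
    using keys_pbw_column[of w b] b w by (auto simp: pbw_index_def tens_space_def)
  show "iota b * Hw H d w = pbw_sum (pbw_column w b)" by (simp add: pbw_sum_column[OF b])
qed

definition pbw_ext :: "('j list \<times> (nat \<Rightarrow> nat) \<Rightarrow> 'w) \<Rightarrow> 'w \<Rightarrow> 'w" where
  "pbw_ext g z = (\<Sum>p\<in>Poly_Mapping.keys (pbw_coords z). smul (Poly_Mapping.lookup (pbw_coords z) p) (g p))"

lemma sum_keys_superset:
  assumes "finite A" "Poly_Mapping.keys f \<subseteq> A"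
  shows "(\<Sum>p\<in>Poly_Mapping.keys f. smul (Poly_Mapping.lookup f p) (g p)) = (\<Sum>p\<in>A. smul (Poly_Mapping.lookup f p) (g p))"
  by (rule sum.mono_neutral_left) (use assms in \<open>auto simp: in_keys_iff\<close>)

lemma pbw_ext_add: "pbw_ext g (x + y) = pbw_ext g x + pbw_ext g y"
proof -
  let ?A = "Poly_Mapping.keys (pbw_coords x) \<union> Poly_Mapping.keys (pbw_coords y)"
  have "pbw_ext g (x + y) = (\<Sum>p\<in>?A. smul (Poly_Mapping.lookup (pbw_coords x + pbw_coords y) p) (g p))"
    unfolding pbw_ext_def pbw_coords_add by (rule sum_keys_superset) (auto dest: subsetD[OF keys_add])
  also have "\<dots> = (\<Sum>p\<in>?A. smul (Poly_Mapping.lookup (pbw_coords x) p) (g p)) + (\<Sum>p\<in>?A. smul (Poly_Mapping.lookup (pbw_coords y) p) (g p))"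
    by (simp add: lookup_add smul_add_l sum.distrib)
  also have "\<dots> = pbw_ext g x + pbw_ext g y"
  proof -
    have e1: "(\<Sum>p\<in>Poly_Mapping.keys (pbw_coords x). smul (Poly_Mapping.lookup (pbw_coords x) p) (g p)) = (\<Sum>p\<in>?A. smul (Poly_Mapping.lookup (pbw_coords x) p) (g p))"
      by (rule sum_keys_superset) auto
    have e2: "(\<Sum>p\<in>Poly_Mapping.keys (pbw_coords y). smul (Poly_Mapping.lookup (pbw_coords y) p) (g p)) = (\<Sum>p\<in>?A. smul (Poly_Mapping.lookup (pbw_coords y) p) (g p))"
      by (rule sum_keys_superset) auto
    show ?thesis unfolding pbw_ext_def e1 e2 ..
  qed
  finally show ?thesis .
qed

lemma pbw_ext_smul: "pbw_ext g (smul c x) = smul c (pbw_ext g x)"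
proof -
  have "pbw_ext g (smul c x) = (\<Sum>p\<in>Poly_Mapping.keys (pbw_coords x). smul (Poly_Mapping.lookup (pscale c (pbw_coords x)) p) (g p))"
    unfolding pbw_ext_def pbw_coords_smul by (rule sum_keys_superset) (auto simp: in_keys_iff)
  then show ?thesis by (simp add: pbw_ext_def smul_sum smul_smul)
qed

lemma pbw_ext_zero: "pbw_ext g 0 = 0"
  using pbw_ext_smul[of g 0 0] by simp

lemma pbw_ext_iota_Hw:
  assumes b: "b \<in> T" and w: "w permutes {1..d}"
  shows "pbw_ext g (iota b * Hw H d w) = (\<Sum>a\<in>Poly_Mapping.keys b. smul (Poly_Mapping.lookup b a) (g (a, w)))"
proof -
  have "pbw_ext g (iota b * Hw H d w) = (\<Sum>p\<in>Poly_Mapping.keys b \<times> {w}. smul (Poly_Mapping.lookup (pbw_column w b) p) (g p))"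
    unfolding pbw_ext_def pbw_coords_iota_Hw[OF b w] by (rule sum_keys_superset) (simp_all add: keys_pbw_column)
  also have "\<dots> = (\<Sum>a\<in>Poly_Mapping.keys b. smul (Poly_Mapping.lookup b a) (g (a, w)))"
  proof -
    have "Poly_Mapping.keys b \<times> {w} = (\<lambda>a. (a, w)) ` Poly_Mapping.keys b" by auto
    moreover have "inj_on (\<lambda>a. (a, w)) (Poly_Mapping.keys b)" by (auto simp: inj_on_def)
    ultimately show ?thesis by (simp add: sum.reindex lookup_pbw_column)
  qed
  finally show ?thesis .
qed

lemma pbw_expansion: "z = (\<Sum>p\<in>Poly_Mapping.keys (pbw_coords z). smul (Poly_Mapping.lookup (pbw_coords z) p) (iota (ebasis (fst p)) * Hw H d (snd p)))"
  using pbw_sum_coords[of z] by (simp add: pbw_sum_def pbw_elem_def)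

lemma pbw_coords_index: "p \<in> Poly_Mapping.keys (pbw_coords z) \<Longrightarrow> length (fst p) = d \<and> snd p permutes {1..d}"
  using keys_pbw_coords[of z] by (auto simp: pbw_index_def)

text \<open>Uniqueness of PBW coordinates in the two columns \<open>w = id\<close> and \<open>w = s\<^sub>i\<close>.\<close>

lemma iota_H_plus_iota_inj:
  assumes i: "i \<in> {1..<d}" and xy: "x \<in> T" "y \<in> T" "x' \<in> T" "y' \<in> T"
    and e: "iota x * H i + iota y = iota x' * H i + iota y'"
  shows "x = x' \<and> y = y'"
proof -
  have ps: "sref i permutes {1..d}" by (rule sref_permutes[OF i])
  have pid: "id permutes {1..d}" by (rule permutes_id)
  have cc: "pbw_coords (iota u * H i + iota v) = pbw_column (sref i) u + pbw_column id v" if "u \<in> T" "v \<in> T" for u v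
  proof -
    have "iota u * H i + iota v = iota u * Hw H d (sref i) + iota v * Hw H d id"
      by (simp add: Hw_sref[OF i] Hw_id)
    then show ?thesis by (simp add: pbw_coords_add pbw_coords_iota_Hw[OF that(1) ps] pbw_coords_iota_Hw[OF that(2) pid])
  qed
  have eq: "pbw_column (sref i) x + pbw_column id y = pbw_column (sref i) x' + pbw_column id y'"
    using cc[OF xy(1,2)] cc[OF xy(3,4)] e by simp
  have "Poly_Mapping.lookup x a = Poly_Mapping.lookup x' a" for a
    using arg_cong[OF eq, of "\<lambda>f. Poly_Mapping.lookup f (a, sref i)"] sref_ne_id[of i]
    by (simp add: lookup_add lookup_pbw_column)
  moreover have "Poly_Mapping.lookup y a = Poly_Mapping.lookup y' a" for a
    using arg_cong[OF eq, of "\<lambda>f. Poly_Mapping.lookup f (a, id)"] sref_ne_id[of i]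
    by (simp add: lookup_add lookup_pbw_column)
  ultimately show ?thesis by (simp add: poly_mapping_eqI)
qed

lemma sigma_tens_space: "X \<in> tens_space 2 \<Longrightarrow> \<sigma> X \<in> tens_space 2" using sigma_into by blast
lemma rho_tens_space: "X \<in> tens_space 2 \<Longrightarrow> \<rho> X \<in> tens_space 2" using rho_into by blast

lemma sigma_expand: "X \<in> tens_space 2 \<Longrightarrow> lin_ext (\<lambda>a. \<sigma> (ebasis a)) X = \<sigma> X"
  using lin_on_expand[OF sigma_lin] by simp
lemma rho_expand: "X \<in> tens_space 2 \<Longrightarrow> lin_ext (\<lambda>a. \<rho> (ebasis a)) X = \<rho> X"
  using lin_on_expand[OF rho_lin] by simp

lemma tens_space_loc_sigma: "i \<in> {1..<d} \<Longrightarrow> b \<in> T \<Longrightarrow> loc i \<sigma> b \<in> T"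
  by (rule tens_space_loc) (auto intro: sigma_tens_space tens_space_ebasis)
lemma tens_space_loc_rho: "i \<in> {1..<d} \<Longrightarrow> b \<in> T \<Longrightarrow> loc i \<rho> b \<in> T"
  by (rule tens_space_loc) (auto intro: rho_tens_space tens_space_ebasis)

lemma tens_space_star: "b \<in> tens_space n \<Longrightarrow> star b \<in> tens_space n" by (rule tens_space_starT)

lemma tens_space_emb_d: "i \<in> {1..<d} \<Longrightarrow> Z \<in> tens_space 2 \<Longrightarrow> emb oneB d i Z \<in> T"
  by (rule tens_space_emb) auto

lemma loc_sigma_emb: "i \<in> {1..<d} \<Longrightarrow> Z \<in> tens_space 2 \<Longrightarrow> loc i \<sigma> (emb oneB d i Z) = emb oneB d i (\<sigma> Z)"
  by (simp add: loc_emb sigma_expand)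
lemma loc_rho_emb: "i \<in> {1..<d} \<Longrightarrow> Z \<in> tens_space 2 \<Longrightarrow> loc i \<rho> (emb oneB d i Z) = emb oneB d i (\<rho> Z)"
  by (simp add: loc_emb rho_expand)

lemma star_emb: "star (emb oneB d i Z) = emb oneB d i (star Z)"
  by (rule starT_emb[OF star_B])

lemma emb_add: "emb oneB d i X + emb oneB d i Y = emb oneB d i (X + Y)"
  by (simp add: klin_add[OF klin_emb])

lemma one_in_range: "(1::nat) \<in> {1..<d}" using d2 by simp

lemma iota_klin_expand:
  assumes g: "klin g" and gT: "\<And>a. length a = d \<Longrightarrow> g (ebasis a) \<in> T" and b: "b \<in> T"
  shows "iota (g b) = (\<Sum>a\<in>Poly_Mapping.keys b. smul (Poly_Mapping.lookup b a) (iota (g (ebasis a))))"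
  unfolding klin_expand[OF g, of b] using b gT by (intro iota_lin_ext) (auto simp: tens_space_def)

section \<open>Necessity of the conditions\<close>

definition extends_star :: "('w \<Rightarrow> 'w) \<Rightarrow> bool" where
  "extends_star \<phi> \<longleftrightarrow> anti_hom_W smul \<phi> \<and> (\<forall>b\<in>T. \<phi> (iota b) = iota (star b)) \<and> (\<forall>i\<in>{1..<d}. \<phi> (H i) = H i)"

definition star_conditions :: bool where
  "star_conditions \<longleftrightarrow> (\<sigma> (star S) = S \<and> \<rho> (star S) + star R = R) \<and>
     (\<forall>b\<in>tens_space 2. \<sigma> (star (\<sigma> b)) = star b \<and> \<rho> (star (\<sigma> b)) + star (\<rho> b) = 0)"

lemma local_mixed_of_anti_hom:
  assumes phi: "extends_star \<phi>" and i: "i \<in> {1..<d}" and b: "b \<in> T"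
  shows "loc i \<sigma> (star (loc i \<sigma> b)) = star b \<and> loc i \<rho> (star (loc i \<sigma> b)) + star (loc i \<rho> b) = 0"
proof -
  have anti: "anti_hom_W smul \<phi>" and phi_iota: "\<And>b. b \<in> T \<Longrightarrow> \<phi> (iota b) = iota (star b)"
    and phi_H: "\<phi> (H i) = H i" using phi i by (simp_all add: extends_star_def)
  let ?c = "star (loc i \<sigma> b)"
  have sb: "loc i \<sigma> b \<in> T" "loc i \<rho> b \<in> T" using tens_space_loc_sigma[OF i b] tens_space_loc_rho[OF i b] .
  have c: "?c \<in> T" "star (loc i \<rho> b) \<in> T" using tens_space_star sb by auto
  have m: "loc i \<sigma> ?c \<in> T" "loc i \<rho> ?c \<in> T"
    using tens_space_loc_sigma[OF i c(1)] tens_space_loc_rho[OF i c(1)] .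
  have "iota (star b) * H i + iota 0 = \<phi> (H i * iota b)"
    by (simp add: anti_hom_W_mult[OF anti] phi_H phi_iota b)
  also have "\<dots> = \<phi> (iota (loc i \<sigma> b) * H i + iota (loc i \<rho> b))"
    by (simp add: H_iota_commute[OF i b])
  also have "\<dots> = H i * iota ?c + iota (star (loc i \<rho> b))"
    by (simp add: anti_hom_W_add[OF anti] anti_hom_W_mult[OF anti] phi_H phi_iota sb)
  also have "\<dots> = iota (loc i \<sigma> ?c) * H i + iota (loc i \<rho> ?c + star (loc i \<rho> b))"
    using H_iota_commute[OF i c(1)] by (simp add: iota_add m(2) c(2) add.assoc)
  finally show ?thesis
    using iota_H_plus_iota_inj[OF i tens_space_star[OF b] tens_space_zero m(1) tens_space_add[OF m(2) c(2)]]
    by simp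
qed

lemma local_quadratic_of_anti_hom:
  assumes phi: "extends_star \<phi>" and i: "i \<in> {1..<d}"
  shows "loc i \<sigma> (star (emb oneB d i S)) = emb oneB d i S \<and>
    loc i \<rho> (star (emb oneB d i S)) + star (emb oneB d i R) = emb oneB d i R"
proof -
  have anti: "anti_hom_W smul \<phi>" and phi_iota: "\<And>b. b \<in> T \<Longrightarrow> \<phi> (iota b) = iota (star b)"
    and phi_H: "\<phi> (H i) = H i" using phi i by (simp_all add: extends_star_def)
  let ?S = "emb oneB d i S" and ?R = "emb oneB d i R"
  have E: "?S \<in> T" "?R \<in> T" using tens_space_emb_d[OF i] S_in R_in by auto
  have sE: "star ?S \<in> T" "star ?R \<in> T" using tens_space_star E by auto
  have m: "loc i \<sigma> (star ?S) \<in> T" "loc i \<rho> (star ?S) \<in> T"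
    using tens_space_loc_sigma[OF i sE(1)] tens_space_loc_rho[OF i sE(1)] .
  have "\<phi> (H i * H i) = H i * H i" by (simp add: anti_hom_W_mult[OF anti] phi_H)
  then have "iota ?S * H i + iota ?R = \<phi> (H i * H i)" by (simp add: H_quadratic[OF i])
  also have "\<dots> = H i * iota (star ?S) + iota (star ?R)"
    by (simp add: H_quadratic[OF i] anti_hom_W_add[OF anti] anti_hom_W_mult[OF anti] phi_H phi_iota E)
  also have "\<dots> = iota (loc i \<sigma> (star ?S)) * H i + iota (loc i \<rho> (star ?S) + star ?R)"
    using H_iota_commute[OF i sE(1)] by (simp add: iota_add m(2) sE(2) add.assoc)
  finally show ?thesis
    using iota_H_plus_iota_inj[OF i E m(1) tens_space_add[OF m(2) sE(2)]] by simp
qed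

text \<open>At position \<open>1\<close> the local identities are the conditions transported by the injective
  map \<open>emb\<close>.\<close>

lemma conditions_of_anti_hom:
  assumes phi: "extends_star \<phi>"
  shows star_conditions
  unfolding star_conditions_def
proof (intro conjI ballI)
  note i = one_in_range
  have sS: "star S \<in> tens_space 2" "star R \<in> tens_space 2" using tens_space_star S_in R_in by auto
  note quad = local_quadratic_of_anti_hom[OF phi i]
  have "emb oneB d 1 (\<sigma> (star S)) = emb oneB d 1 S"
    using quad unfolding star_emb loc_sigma_emb[OF i sS(1)] by simp
  then show "\<sigma> (star S) = S" by (rule emb_injective[OF B_alg sigma_tens_space[OF sS(1)] S_in])
  have "emb oneB d 1 (\<rho> (star S) + star R) = emb oneB d 1 R"
    using quad unfolding star_emb loc_rho_emb[OF i sS(1)] emb_add by simp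
  then show "\<rho> (star S) + star R = R"
    by (rule emb_injective[OF B_alg tens_space_add[OF rho_tens_space[OF sS(1)] sS(2)] R_in])
  fix X :: "'j list \<Rightarrow>\<^sub>0 'k" assume X: "X \<in> tens_space 2"
  have sX: "\<sigma> X \<in> tens_space 2" "star (\<sigma> X) \<in> tens_space 2" "star (\<rho> X) \<in> tens_space 2"
    using tens_space_star sigma_tens_space rho_tens_space X by auto
  note mixed = local_mixed_of_anti_hom[OF phi i tens_space_emb_d[OF i X]]
  have "emb oneB d 1 (\<sigma> (star (\<sigma> X))) = emb oneB d 1 (star X)"
    using mixed unfolding loc_sigma_emb[OF i X] star_emb loc_sigma_emb[OF i sX(2)] by simp
  then show "\<sigma> (star (\<sigma> X)) = star X"
    by (rule emb_injective[OF B_alg sigma_tens_space[OF sX(2)] tens_space_star[OF X]])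
  have "emb oneB d 1 (\<rho> (star (\<sigma> X)) + star (\<rho> X)) = 0"
    using mixed
    unfolding loc_sigma_emb[OF i X] loc_rho_emb[OF i X] star_emb loc_rho_emb[OF i sX(2)] emb_add by simp
  then show "\<rho> (star (\<sigma> X)) + star (\<rho> X) = 0"
    by (rule emb_eq_0D[OF B_alg tens_space_add[OF rho_tens_space[OF sX(2)] sX(3)]])
qed


lemma loc_tprod_middle:
  assumes i: "1 \<le> i" and u: "u \<in> tens_space (i - 1)" and X: "X \<in> tens_space 2"
  shows "loc i \<sigma> (tprod u (tprod X v)) = tprod u (tprod (\<sigma> X) v)"
    and "loc i \<rho> (tprod u (tprod X v)) = tprod u (tprod (\<rho> X) v)"
  by (simp_all add: loc_tprod[OF i u X] sigma_expand[OF X] rho_expand[OF X])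

end

section \<open>Construction of the anti-automorphism\<close>

locale quantum_wreath_star = quantum_wreath +
  assumes conditions: "star_conditions"
begin

lemma star_condition_quadratic: "\<sigma> (star S) = S \<and> \<rho> (star S) + star R = R"
  and star_condition_mixed: "X \<in> tens_space 2 \<Longrightarrow> \<sigma> (star (\<sigma> X)) = star X \<and> \<rho> (star (\<sigma> X)) + star (\<rho> X) = 0"
  using conditions by (simp_all add: star_conditions_def)

lemma local_quadratic_of_conditions:
  assumes i: "i \<in> {1..<d}"
  shows "loc i \<sigma> (star (emb oneB d i S)) = emb oneB d i S"
    "loc i \<rho> (star (emb oneB d i S)) + star (emb oneB d i R) = emb oneB d i R"
proof -
  have sS: "star S \<in> tens_space 2" using tens_space_star S_in by auto
  show "loc i \<sigma> (star (emb oneB d i S)) = emb oneB d i S"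
    using star_condition_quadratic by (simp add: star_emb loc_sigma_emb[OF i sS])
  show "loc i \<rho> (star (emb oneB d i S)) + star (emb oneB d i R) = emb oneB d i R"
    using star_condition_quadratic by (simp add: star_emb loc_rho_emb[OF i sS] emb_add)
qed

lemma local_mixed_of_conditions_tprod:
  assumes i: "1 \<le> i" and u: "u \<in> tens_space (i - 1)" and X: "X \<in> tens_space 2"
    and b: "b = tprod u (tprod X v)"
  shows "loc i \<sigma> (star (loc i \<sigma> b)) = star b \<and> loc i \<rho> (star (loc i \<sigma> b)) + star (loc i \<rho> b) = 0"
proof -
  have su: "star u \<in> tens_space (i - 1)" and sX: "star (\<sigma> X) \<in> tens_space 2"
    using u X by (simp_all add: tens_space_star sigma_tens_space)
  have c: "\<sigma> (star (\<sigma> X)) = star X" "\<rho> (star (\<sigma> X)) + star (\<rho> X) = 0" using star_condition_mixed[OF X] by auto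
  have star_loc: "star (loc i \<sigma> b) = tprod (star u) (tprod (star (\<sigma> X)) (star v))"
    "star (loc i \<rho> b) = tprod (star u) (tprod (star (\<rho> X)) (star v))"
    by (simp_all add: b loc_tprod_middle[OF i u X] starT_tprod)
  have "loc i \<sigma> (star (loc i \<sigma> b)) = tprod (star u) (tprod (\<sigma> (star (\<sigma> X))) (star v))"
    unfolding star_loc(1) by (rule loc_tprod_middle(1)[OF i su sX])
  also have "\<dots> = star b" by (simp add: c(1) b starT_tprod)
  moreover have "loc i \<rho> (star (loc i \<sigma> b)) + star (loc i \<rho> b) =
      tprod (star u) (tprod (\<rho> (star (\<sigma> X)) + star (\<rho> X)) (star v))"
    unfolding star_loc loc_tprod_middle(2)[OF i su sX]
    by (simp add: klin_add[OF klin_tprod_left] klin_add[OF klin_tprod_right])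
  ultimately show ?thesis by (simp add: c(2))
qed

lemma local_mixed_of_conditions:
  assumes i: "i \<in> {1..<d}" and b: "b \<in> T"
  shows "loc i \<sigma> (star (loc i \<sigma> b)) = star b \<and> loc i \<rho> (star (loc i \<sigma> b)) + star (loc i \<rho> b) = 0"
proof -
  have basis: "loc i \<sigma> (star (loc i \<sigma> (ebasis a))) = star (ebasis a) \<and>
      loc i \<rho> (star (loc i \<sigma> (ebasis a))) + star (loc i \<rho> (ebasis a)) = 0" if a: "length a = d" for a
  proof -
    have i1: "1 \<le> i" and lt: "length (take (i - 1) a) = i - 1" using i a by auto
    have X: "ebasis [a ! (i - 1), a ! i] \<in> tens_space 2" by (simp add: tens_space_ebasis)
    have "ebasis a = tprod (ebasis (take (i - 1) a)) (tprod (ebasis [a ! (i - 1), a ! i]) (ebasis (drop (i + 1) a)))"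
      by (rule ebasis_split_at) (use i a in auto)
    from local_mixed_of_conditions_tprod[OF i1 tens_space_ebasis[OF lt] X this] show ?thesis .
  qed
  have k1: "klin (\<lambda>b. loc i \<sigma> (star (loc i \<sigma> b)))"
    by (intro klin_comp[OF klin_loc klin_comp[OF klin_starT klin_loc]])
  have k2: "klin (\<lambda>b. loc i \<rho> (star (loc i \<sigma> b)) + star (loc i \<rho> b))"
    by (intro klin_plus klin_comp[OF klin_loc klin_comp[OF klin_starT klin_loc]] klin_comp[OF klin_starT klin_loc])
  have "loc i \<sigma> (star (loc i \<sigma> b)) = star b"
    by (rule klin_eq_on_keys[OF k1 klin_starT]) (use basis b in \<open>auto simp: tens_space_def\<close>)
  moreover have "loc i \<rho> (star (loc i \<sigma> b)) + star (loc i \<rho> b) = 0"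
    using klin_eq_on_keys[OF k2 klin_zero_map, of b] basis b by (auto simp: tens_space_def)
  ultimately show ?thesis ..
qed

lemma starred_quadratic_relation:
  assumes i: "i \<in> {1..<d}"
  shows "H i * iota (star (emb oneB d i S)) + iota (star (emb oneB d i R)) = H i * H i"
proof -
  have E: "star (emb oneB d i S) \<in> T" "star (emb oneB d i R) \<in> T"
    using tens_space_star tens_space_emb_d[OF i] S_in R_in by auto
  have "H i * iota (star (emb oneB d i S)) + iota (star (emb oneB d i R)) =
      iota (loc i \<sigma> (star (emb oneB d i S))) * H i +
      (iota (loc i \<rho> (star (emb oneB d i S))) + iota (star (emb oneB d i R)))"
    by (simp add: H_iota_commute[OF i E(1)] add.assoc)
  also have "\<dots> = iota (emb oneB d i S) * H i + iota (emb oneB d i R)"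
    by (simp add: local_quadratic_of_conditions[OF i] iota_add[OF tens_space_loc_rho[OF i E(1)] E(2), symmetric])
  also have "\<dots> = H i * H i" by (simp add: H_quadratic[OF i])
  finally show ?thesis .
qed

lemma starred_mixed_relation:
  assumes i: "i \<in> {1..<d}" and c: "c \<in> T"
  shows "iota (star c) * H i = H i * iota (star (loc i \<sigma> c)) + iota (star (loc i \<rho> c))"
proof -
  have m: "star (loc i \<sigma> c) \<in> T" "star (loc i \<rho> c) \<in> T"
    using tens_space_star tens_space_loc_sigma[OF i c] tens_space_loc_rho[OF i c] by auto
  have "H i * iota (star (loc i \<sigma> c)) + iota (star (loc i \<rho> c)) =
      iota (loc i \<sigma> (star (loc i \<sigma> c))) * H i + (iota (loc i \<rho> (star (loc i \<sigma> c))) + iota (star (loc i \<rho> c)))"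
    by (simp add: H_iota_commute[OF i m(1)] add.assoc)
  also have "\<dots> = iota (star c) * H i + iota 0"
    using local_mixed_of_conditions[OF i c] by (simp add: iota_add[OF tens_space_loc_rho[OF i m(1)] m(2), symmetric])
  finally show ?thesis by simp
qed

end

datatype 'b gen = Hg nat | Bg 'b

fun count_H :: "'b gen list \<Rightarrow> nat" where
  "count_H [] = 0" | "count_H (Hg i # gs) = Suc (count_H gs)" | "count_H (Bg b # gs) = count_H gs"

fun H_letters :: "'b gen list \<Rightarrow> nat list" where
  "H_letters [] = []" | "H_letters (Hg i # gs) = i # H_letters gs" | "H_letters (Bg b # gs) = H_letters gs"

lemma length_H_letters: "length (H_letters gs) = count_H gs"
  by (induction gs rule: H_letters.induct) simp_all

lemma count_H_append: "count_H (xs @ ys) = count_H xs + count_H ys"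
  by (induction xs rule: H_letters.induct) simp_all

lemma count_H_map_Hg [simp]: "count_H (map Hg u) = length u"
  by (induction u) simp_all

context quantum_wreath_star begin

definition eval_gen where
  "eval_gen g = (case g of Hg i \<Rightarrow> H i | Bg b \<Rightarrow> iota b)"
definition eval_gen_star where
  "eval_gen_star g = (case g of Hg i \<Rightarrow> H i | Bg b \<Rightarrow> iota (star b))"
definition eval_word where
  "eval_word gs = prod_list (map eval_gen gs)"
definition eval_star_word where
  "eval_star_word gs = prod_list (rev (map eval_gen_star gs))"
definition admissible where
  "admissible gs \<longleftrightarrow> (\<forall>g\<in>set gs. case g of Hg i \<Rightarrow> i \<in> {1..<d} | Bg b \<Rightarrow> b \<in> T)"

lemma eval_word_Nil [simp]: "eval_word [] = 1" and eval_star_word_Nil [simp]: "eval_star_word [] = 1"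
  by (simp_all add: eval_word_def eval_star_word_def)
lemma eval_word_Cons_H [simp]: "eval_word (Hg i # gs) = H i * eval_word gs" by (simp add: eval_word_def eval_gen_def)
lemma eval_word_Cons_B [simp]: "eval_word (Bg b # gs) = iota b * eval_word gs" by (simp add: eval_word_def eval_gen_def)
lemma eval_star_word_Cons_H [simp]: "eval_star_word (Hg i # gs) = eval_star_word gs * H i" by (simp add: eval_star_word_def eval_gen_star_def)
lemma eval_star_word_Cons_B [simp]: "eval_star_word (Bg b # gs) = eval_star_word gs * iota (star b)" by (simp add: eval_star_word_def eval_gen_star_def)
lemma eval_word_append: "eval_word (xs @ ys) = eval_word xs * eval_word ys" by (simp add: eval_word_def)
lemma eval_star_word_append: "eval_star_word (xs @ ys) = eval_star_word ys * eval_star_word xs" by (simp add: eval_star_word_def)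
lemma eval_word_map_Hg [simp]: "eval_word (map Hg u) = prod_list (map H u)" by (induction u) simp_all
lemma eval_star_word_map_Hg [simp]: "eval_star_word (map Hg u) = prod_list (map H (rev u))" by (induction u) simp_all

lemma admissible_Nil [simp]: "admissible []" by (simp add: admissible_def)
lemma admissible_Cons_H [simp]: "admissible (Hg i # gs) \<longleftrightarrow> i \<in> {1..<d} \<and> admissible gs" by (simp add: admissible_def)
lemma admissible_Cons_B [simp]: "admissible (Bg b # gs) \<longleftrightarrow> b \<in> T \<and> admissible gs" by (simp add: admissible_def)
lemma admissible_append [simp]: "admissible (xs @ ys) \<longleftrightarrow> admissible xs \<and> admissible ys" by (auto simp: admissible_def)
lemma admissible_map_Hg [simp]: "admissible (map Hg u) \<longleftrightarrow> set u \<subseteq> {1..<d}" by (auto simp: admissible_def)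

lemma admissible_H_letters: "admissible gs \<Longrightarrow> set (H_letters gs) \<subseteq> {1..<d}"
  by (induction gs rule: H_letters.induct) auto

text \<open>\<open>star_pairs n\<close> is the span of the pairs \<open>(w, w\<^sup>*)\<close> for words \<open>w\<close> with at most \<open>n\<close>
  letters \<open>H\<close>; the anti-automorphism has to map the first component of each pair to the second.\<close>

inductive_set star_pairs for n :: nat where
  star_pairs_word: "admissible gs \<Longrightarrow> count_H gs \<le> n \<Longrightarrow> (eval_word gs, eval_star_word gs) \<in> star_pairs n"
| star_pairs_zero: "(0, 0) \<in> star_pairs n"
| star_pairs_add: "(x, y) \<in> star_pairs n \<Longrightarrow> (x', y') \<in> star_pairs n \<Longrightarrow> (x + x', y + y') \<in> star_pairs n"
| star_pairs_smul: "(x, y) \<in> star_pairs n \<Longrightarrow> (smul c x, smul c y) \<in> star_pairs n"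

lemma star_pairs_mono: "(x0, y0) \<in> star_pairs m \<Longrightarrow> m \<le> n \<Longrightarrow> (x0, y0) \<in> star_pairs n"
proof (induction rule: star_pairs.induct)
  case (star_pairs_word gs) then show ?case by (intro star_pairs.star_pairs_word) auto
next
  case star_pairs_zero show ?case by (rule star_pairs.star_pairs_zero)
next
  case (star_pairs_add x y x' y') then show ?case by (intro star_pairs.star_pairs_add) auto
next
  case (star_pairs_smul x y c) then show ?case by (intro star_pairs.star_pairs_smul) auto
qed

lemma star_pairs_mult_word:
  assumes g: "admissible gs" "count_H gs \<le> n"
  shows "(x', y') \<in> star_pairs m \<Longrightarrow> (eval_word gs * x', y' * eval_star_word gs) \<in> star_pairs (n + m)"
proof (induction rule: star_pairs.induct)
  case (star_pairs_word hs')
  have "(eval_word (gs @ hs'), eval_star_word (gs @ hs')) \<in> star_pairs (n + m)"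
    using g star_pairs_word by (intro star_pairs.star_pairs_word) (auto simp: count_H_append)
  then show ?case by (simp add: eval_word_append eval_star_word_append)
next
  case star_pairs_zero then show ?case using star_pairs.star_pairs_zero by simp
next
  case (star_pairs_add x y x' y')
  then show ?case using star_pairs.star_pairs_add by (simp add: distrib_left distrib_right)
next
  case (star_pairs_smul x y c)
  then show ?case using star_pairs.star_pairs_smul by (simp add: smul_mult_l smul_mult_r)
qed

lemma star_pairs_mult:
  assumes "(x', y') \<in> star_pairs m"
  shows "(x, y) \<in> star_pairs n \<Longrightarrow> (x * x', y' * y) \<in> star_pairs (n + m)"
proof (induction rule: star_pairs.induct)
  case (star_pairs_word gs) then show ?case by (rule star_pairs_mult_word[OF _ _ assms])
next
  case star_pairs_zero then show ?case using star_pairs.star_pairs_zero by simp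
next
  case (star_pairs_add x y x'' y'')
  then show ?case using star_pairs.star_pairs_add by (simp add: distrib_left distrib_right)
next
  case (star_pairs_smul x y c)
  then show ?case using star_pairs.star_pairs_smul by (simp add: smul_mult_l smul_mult_r)
qed

lemma star_pairs_word_count: "admissible gs \<Longrightarrow> (eval_word gs, eval_star_word gs) \<in> star_pairs (count_H gs)"
  by (rule star_pairs_word) simp_all


text \<open>The error terms of \<open>eval_word_leading_term\<close>; for \<open>n = 0\<close> they must vanish, as there
  are no shorter words to induct on.\<close>

definition lower_pairs where
  "lower_pairs n = (if n = 0 then {(0, 0)} else star_pairs (n - 1))"

lemma lower_pairs_Suc [simp]: "lower_pairs (Suc n) = star_pairs n"
  by (simp add: lower_pairs_def)

lemma lower_pairs_mult:
  assumes xy: "(x, y) \<in> lower_pairs n" and a: "(a, a') \<in> star_pairs k"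
  shows "(a * x, y * a') \<in> lower_pairs (n + k)"
proof (cases n)
  case 0
  then show ?thesis using xy by (cases k) (auto simp: lower_pairs_def intro: star_pairs_zero)
next
  case (Suc m)
  then show ?thesis using star_pairs_mult[of x y m a a' k] xy a by (simp add: add.commute)
qed

lemma leading_term_Cons_H:
  assumes i: "i \<in> {1..<d}" and c: "c \<in> T" and u: "set u \<subseteq> {1..<d}"
    and xy: "(x, y) \<in> lower_pairs (length u)"
  defines "P \<equiv> prod_list (map H u)" and "P' \<equiv> prod_list (map H (rev u))"
  shows "H i * (iota c * P + x) = iota (loc i \<sigma> c) * (H i * P) + (iota (loc i \<rho> c) * P + H i * x)"
    and "(P' * iota (star c) + y) * H i = (P' * H i) * iota (star (loc i \<sigma> c)) + (P' * iota (star (loc i \<rho> c)) + y * H i)"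
    and "(iota (loc i \<rho> c) * P + H i * x, P' * iota (star (loc i \<rho> c)) + y * H i) \<in> lower_pairs (Suc (length u))"
proof -
  show "H i * (iota c * P + x) = iota (loc i \<sigma> c) * (H i * P) + (iota (loc i \<rho> c) * P + H i * x)"
    by (simp add: H_iota_commute[OF i c] distrib_left distrib_right mult.assoc add.assoc flip: mult.assoc)
  show "(P' * iota (star c) + y) * H i = (P' * H i) * iota (star (loc i \<sigma> c)) + (P' * iota (star (loc i \<rho> c)) + y * H i)"
    by (simp add: starred_mixed_relation[OF i c] distrib_left distrib_right mult.assoc add.assoc)
  have "(iota (loc i \<rho> c) * P, P' * iota (star (loc i \<rho> c))) \<in> star_pairs (length u)"
    using star_pairs_word_count[of "Bg (loc i \<rho> c) # map Hg u"] tens_space_loc_rho[OF i c] u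
    by (simp add: P_def P'_def)
  moreover have "(H i * x, y * H i) \<in> star_pairs (length u)"
    using lower_pairs_mult[OF xy star_pairs_word_count[of "[Hg i]"]] i by simp
  ultimately show "(iota (loc i \<rho> c) * P + H i * x, P' * iota (star (loc i \<rho> c)) + y * H i) \<in> lower_pairs (Suc (length u))"
    by (simp add: star_pairs_add)
qed

lemma leading_term_Cons_B:
  assumes b: "b \<in> T" and c: "c \<in> T" and xy: "(x, y) \<in> lower_pairs n"
  shows "iota b * (iota c * P + x) = iota (mulT mulB b c) * P + iota b * x"
    and "(P' * iota (star c) + y) * iota (star b) = P' * iota (star (mulT mulB b c)) + y * iota (star b)"
    and "(iota b * x, y * iota (star b)) \<in> lower_pairs n"
proof -
  show "iota b * (iota c * P + x) = iota (mulT mulB b c) * P + iota b * x"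
    by (simp add: iota_mult[OF b c] distrib_left mult.assoc)
  show "(P' * iota (star c) + y) * iota (star b) = P' * iota (star (mulT mulB b c)) + y * iota (star b)"
    by (simp add: starT_mulT[OF B_alg star_B b c] iota_mult[OF tens_space_star[OF c] tens_space_star[OF b]]
        distrib_right mult.assoc)
  show "(iota b * x, y * iota (star b)) \<in> lower_pairs n"
    using lower_pairs_mult[OF xy star_pairs_word_count[of "[Bg b]"]] b by simp
qed

text \<open>Moving all \<open>B\<close>-letters to the left with the mixed relation, and all starred \<open>B\<close>-letters
  to the right with its image under \<open>*\<close>, produces the same leading term on both sides.\<close>

lemma eval_word_leading_term:
  "admissible gs \<Longrightarrow> \<exists>c x y. c \<in> T \<and> (x, y) \<in> lower_pairs (count_H gs) \<and>
      eval_word gs = iota c * prod_list (map H (H_letters gs)) + x \<and>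
      eval_star_word gs = prod_list (map H (rev (H_letters gs))) * iota (star c) + y"
proof (induction gs rule: H_letters.induct)
  case 1
  show ?case
    by (intro exI[of _ "oneT oneB d"] exI[of _ 0])
      (simp add: tens_space_oneT iota_one starT_oneT[OF star_B] lower_pairs_def)
next
  case (2 i gs)
  have i: "i \<in> {1..<d}" and gs: "admissible gs" using 2(2) by simp_all
  have u: "set (H_letters gs) \<subseteq> {1..<d}" using gs by (rule admissible_H_letters)
  from 2 obtain c x y where c: "c \<in> T" and xy: "(x, y) \<in> lower_pairs (length (H_letters gs))"
    and e: "eval_word gs = iota c * prod_list (map H (H_letters gs)) + x"
      "eval_star_word gs = prod_list (map H (rev (H_letters gs))) * iota (star c) + y"
    by (auto simp: length_H_letters)
  show ?case
    using leading_term_Cons_H[OF i c u xy] e tens_space_loc_sigma[OF i c]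
    by (intro exI[of _ "loc i \<sigma> c"] exI) (auto simp: length_H_letters mult.assoc)
next
  case (3 b gs)
  then have b: "b \<in> T" by simp
  from 3 obtain c x y where c: "c \<in> T" and xy: "(x, y) \<in> lower_pairs (count_H gs)"
    and e: "eval_word gs = iota c * prod_list (map H (H_letters gs)) + x"
      "eval_star_word gs = prod_list (map H (rev (H_letters gs))) * iota (star c) + y"
    by auto
  show ?case
    using leading_term_Cons_B[OF b c xy] e tens_space_mulT[OF b c]
    by (intro exI[of _ "mulT mulB b c"] exI) auto
qed

end

context quantum_wreath_star begin

text \<open>The candidate anti-automorphism \<open>(b H\<^sub>w)\<^sup>* = H\<^bsub>w\<^sup>-\<^sup>1\<^esub> b\<^sup>*\<close>, with
  \<open>H\<^bsub>w\<^sup>-\<^sup>1\<^esub>\<close> the product along the reversed reduced expression of \<open>w\<close>.\<close>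

definition star_map where
  "star_map z = pbw_ext (\<lambda>p. prod_list (map H (rev (red_expr d (snd p)))) * iota (star (ebasis (fst p)))) z"

lemma star_map_add: "star_map (x + y) = star_map x + star_map y"
  by (simp add: star_map_def pbw_ext_add)

lemma star_map_smul: "star_map (smul c x) = smul c (star_map x)"
  by (simp add: star_map_def pbw_ext_smul)

lemma star_map_zero [simp]: "star_map 0 = 0"
  by (simp add: star_map_def pbw_ext_zero)

lemma star_map_iota_Hw:
  assumes b: "b \<in> T" and w: "w permutes {1..d}"
  shows "star_map (iota b * Hw H d w) = prod_list (map H (rev (red_expr d w))) * iota (star b)"
  by (simp add: star_map_def pbw_ext_iota_Hw[OF b w] iota_klin_expand[OF klin_starT _ b]
      tens_space_star tens_space_ebasis sum_distrib_left smul_mult_r)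

lemma star_map_star_pairs_le:
  assumes IH: "\<And>gs. admissible gs \<Longrightarrow> count_H gs \<le> n \<Longrightarrow> star_map (eval_word gs) = eval_star_word gs"
  shows "(x, y) \<in> star_pairs n \<Longrightarrow> star_map x = y"
proof (induction rule: star_pairs.induct)
  case (star_pairs_word gs) then show ?case by (rule IH)
next
  case star_pairs_zero then show ?case by simp
next
  case (star_pairs_add x y x' y') then show ?case by (simp add: star_map_add)
next
  case (star_pairs_smul x y c) then show ?case by (simp add: star_map_smul)
qed

lemma star_map_lower_pairs:
  assumes IH: "\<And>m gs. m < n \<Longrightarrow> admissible gs \<Longrightarrow> count_H gs \<le> m \<Longrightarrow> star_map (eval_word gs) = eval_star_word gs"
    and xy: "(x, y) \<in> lower_pairs n"
  shows "star_map x = y"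
proof (cases n)
  case 0 then show ?thesis using xy by (simp add: lower_pairs_def)
next
  case (Suc m)
  then show ?thesis using xy IH[of m] by (auto intro: star_map_star_pairs_le)
qed

lemma prod_H_rev_braid_eq: "braid_eq d u v \<Longrightarrow> prod_list (map H (rev u)) = prod_list (map H (rev v))"
  by (rule prod_H_braid_eq[OF braid_eq_rev])

lemma star_map_iota_prod_H_reduced:
  assumes u: "reduced d u" and c: "c \<in> T"
  shows "star_map (iota c * prod_list (map H u)) = prod_list (map H (rev u)) * iota (star c)"
proof -
  define w where "w = word_perm u"
  have wp: "w permutes {1..d}" unfolding w_def using reduced_permutes[OF u] .
  have "braid_eq d u (red_expr d w)"
    using matsumoto[OF u reduced_red_expr[OF wp]] red_expr_props[OF wp] by (simp add: w_def)
  then show ?thesis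
    using star_map_iota_Hw[OF c wp] by (simp add: Hw_red_expr prod_H_braid_eq prod_H_rev_braid_eq)
qed

text \<open>A non-reduced word of \<open>H\<close>'s contains a square after braid moves; the quadratic relation
  and its image under \<open>*\<close> then reduce both sides to words with fewer \<open>H\<close>'s.\<close>

lemma star_map_iota_prod_H:
  assumes IH: "\<And>m gs. m < length u \<Longrightarrow> admissible gs \<Longrightarrow> count_H gs \<le> m \<Longrightarrow> star_map (eval_word gs) = eval_star_word gs"
    and u: "set u \<subseteq> {1..<d}" and c: "c \<in> T"
  shows "star_map (iota c * prod_list (map H u)) = prod_list (map H (rev u)) * iota (star c)"
proof (cases "reduced d u")
  case True
  then show ?thesis by (rule star_map_iota_prod_H_reduced[OF _ c])
next
  case False
  obtain u1 u2 i where i: "i \<in> {1..<d}" and s1: "set u1 \<subseteq> {1..<d}" and s2: "set u2 \<subseteq> {1..<d}"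
    and len: "length u1 + length u2 + 2 = length u" and b: "braid_eq d u (u1 @ [i, i] @ u2)"
    using not_reduced_braid_eq_square[OF u False] by blast
  define Si where "Si = emb oneB d i S"
  define Ri where "Ri = emb oneB d i R"
  have SiT: "Si \<in> T" "Ri \<in> T" unfolding Si_def Ri_def using tens_space_emb_d[OF i] S_in R_in by auto
  define gs1 where "gs1 = Bg c # map Hg u1 @ Bg Si # map Hg (i # u2)"
  define gs2 where "gs2 = Bg c # map Hg u1 @ Bg Ri # map Hg u2"
  have v1: "admissible gs1" "admissible gs2" unfolding gs1_def gs2_def using c s1 s2 i SiT by auto
  have n1: "count_H gs1 < length u" "count_H gs2 < length u" unfolding gs1_def gs2_def using len by (simp_all add: count_H_append)
  have ph1: "star_map (eval_word gs1) = eval_star_word gs1" by (rule IH[OF n1(1) v1(1) order_refl])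
  have ph2: "star_map (eval_word gs2) = eval_star_word gs2" by (rule IH[OF n1(2) v1(2) order_refl])
  let ?P1 = "prod_list (map H u1)" and ?P2 = "prod_list (map H u2)"
  let ?Q1 = "prod_list (map H (rev u1))" and ?Q2 = "prod_list (map H (rev u2))"
  have "iota c * prod_list (map H u) = iota c * (?P1 * (H i * H i) * ?P2)"
    by (simp add: prod_H_braid_eq[OF b] mult.assoc)
  also have "\<dots> = eval_word gs1 + eval_word gs2"
    by (simp add: gs1_def gs2_def eval_word_append H_quadratic[OF i] Si_def Ri_def distrib_left distrib_right mult.assoc)
  finally have e1: "iota c * prod_list (map H u) = eval_word gs1 + eval_word gs2" .
  have "prod_list (map H (rev u)) * iota (star c) = ?Q2 * (H i * H i) * ?Q1 * iota (star c)"
    by (simp add: prod_H_rev_braid_eq[OF b] mult.assoc)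
  also have "\<dots> = ?Q2 * (H i * iota (star Si) + iota (star Ri)) * ?Q1 * iota (star c)"
    by (simp add: starred_quadratic_relation[OF i] Si_def Ri_def)
  also have "\<dots> = eval_star_word gs1 + eval_star_word gs2"
    by (simp add: gs1_def gs2_def eval_star_word_append distrib_left distrib_right mult.assoc)
  finally have e2: "prod_list (map H (rev u)) * iota (star c) = eval_star_word gs1 + eval_star_word gs2" .
  show ?thesis unfolding e1 e2 by (simp add: star_map_add ph1 ph2)
qed

lemma star_map_eval_word: "admissible gs \<Longrightarrow> star_map (eval_word gs) = eval_star_word gs"
proof (induction "count_H gs" arbitrary: gs rule: less_induct)
  case less
  have IH: "star_map (eval_word gs') = eval_star_word gs'"
    if "m < count_H gs" "admissible gs'" "count_H gs' \<le> m" for m gs'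
    using less.hyps that by simp
  obtain c x y where c: "c \<in> T" and xy: "(x, y) \<in> lower_pairs (count_H gs)"
    and e: "eval_word gs = iota c * prod_list (map H (H_letters gs)) + x"
      "eval_star_word gs = prod_list (map H (rev (H_letters gs))) * iota (star c) + y"
    using eval_word_leading_term[OF less.prems] by blast
  have "star_map (iota c * prod_list (map H (H_letters gs))) = prod_list (map H (rev (H_letters gs))) * iota (star c)"
    by (rule star_map_iota_prod_H[OF _ admissible_H_letters[OF less.prems] c]) (use IH in \<open>simp add: length_H_letters\<close>)
  then show ?case using star_map_lower_pairs[OF IH xy] by (simp add: e star_map_add)
qed

lemma star_map_star_pairs: "(x, y) \<in> star_pairs n \<Longrightarrow> star_map x = y"
  by (rule star_map_star_pairs_le[OF star_map_eval_word])

lemma star_pairs_sum: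
  assumes "finite A" "\<And>p. p \<in> A \<Longrightarrow> \<exists>n. (f p, g p) \<in> star_pairs n"
  shows "\<exists>n. (sum f A, sum g A) \<in> star_pairs n"
  using assms
proof (induction A rule: finite_induct)
  case empty then show ?case using star_pairs_zero by auto
next
  case (insert a A)
  obtain n1 where n1: "(f a, g a) \<in> star_pairs n1" using insert by blast
  obtain n2 where n2: "(sum f A, sum g A) \<in> star_pairs n2" using insert by blast
  have "(f a + sum f A, g a + sum g A) \<in> star_pairs (n1 + n2)"
    by (rule star_pairs_add) (rule star_pairs_mono, (use n1 n2 in auto))+
  then show ?case using insert by auto
qed

definition pbw_word where
  "pbw_word p = Bg (ebasis (fst p)) # map Hg (red_expr d (snd p))"

lemma star_pairs_star_map: "\<exists>n. (z, star_map z) \<in> star_pairs n"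
proof -
  let ?K = "Poly_Mapping.keys (pbw_coords z)" and ?c = "Poly_Mapping.lookup (pbw_coords z)"
  have "\<exists>n. (\<Sum>p\<in>?K. smul (?c p) (eval_word (pbw_word p)), \<Sum>p\<in>?K. smul (?c p) (eval_star_word (pbw_word p)))
      \<in> star_pairs n"
  proof (rule star_pairs_sum)
    fix p assume p: "p \<in> ?K"
    have "admissible (pbw_word p)"
      using pbw_coords_index[OF p] red_expr_props[of "snd p" d] by (auto simp: pbw_word_def intro: tens_space_ebasis)
    then show "\<exists>n. (smul (?c p) (eval_word (pbw_word p)), smul (?c p) (eval_star_word (pbw_word p))) \<in> star_pairs n"
      by (blast intro: star_pairs_smul star_pairs_word_count)
  qed simp
  moreover have "(\<Sum>p\<in>?K. smul (?c p) (eval_word (pbw_word p))) = z"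
    using pbw_expansion[of z] by (simp add: pbw_word_def Hw_red_expr)
  ultimately obtain n y where "(z, y) \<in> star_pairs n" by auto
  then show ?thesis using star_map_star_pairs by blast
qed

lemma star_map_mult: "star_map (x * y) = star_map y * star_map x"
proof -
  obtain n m where "(x, star_map x) \<in> star_pairs n" "(y, star_map y) \<in> star_pairs m"
    using star_pairs_star_map by blast
  then have "(x * y, star_map y * star_map x) \<in> star_pairs (n + m)" by (intro star_pairs_mult)
  then show ?thesis by (rule star_map_star_pairs)
qed

lemma extends_star_star_map: "extends_star star_map"
proof -
  have "star_map (eval_word [Bg b]) = eval_star_word [Bg b]" if "b \<in> T" for b
    using that by (intro star_map_eval_word) simp
  moreover have "star_map (eval_word [Hg i]) = eval_star_word [Hg i]" if "i \<in> {1..<d}" for i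
    using that by (intro star_map_eval_word) simp
  moreover have "star_map 1 = 1" using star_map_eval_word[of "[]"] by simp
  ultimately show ?thesis
    by (simp add: extends_star_def anti_hom_W_def star_map_add star_map_smul star_map_mult)
qed

end

lemma (in quantum_wreath) extends_star_iff_conditions: "(\<exists>\<phi>. extends_star \<phi>) \<longleftrightarrow> star_conditions"
proof
  assume "\<exists>\<phi>. extends_star \<phi>"
  then show star_conditions using conditions_of_anti_hom by blast
next
  assume star_conditions
  then interpret quantum_wreath_star mulB oneB starB S R \<sigma> \<rho> smul iota H d
    by (intro quantum_wreath_star.intro quantum_wreath_axioms quantum_wreath_star_axioms.intro)
  show "\<exists>\<phi>. extends_star \<phi>" using extends_star_star_map by blast
qed

section \<open>Bijectivity\<close>

lemma klin_inv:
  assumes k: "klin f" and b: "bij f"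
  shows "klin (inv f)"
proof (rule klinI)
  have fi: "f (inv f y) = y" for y using b by (simp add: bij_is_surj surj_f_inv_f)
  have if_: "inv f (f y) = y" for y using b by (simp add: bij_is_inj inv_f_f)
  show "inv f (x + y) = inv f x + inv f y" for x y
    using if_[of "inv f x + inv f y"] by (simp add: klin_add[OF k] fi)
  show "inv f (pscale c x) = pscale c (inv f x)" for c x
    using if_[of "pscale c (inv f x)"] by (simp add: klin_pscale[OF k] fi)
qed

lemma bij_if_bij_comp_self: "bij (f \<circ> f) \<Longrightarrow> bij f"
  unfolding bij_def by (metis inj_on_imageI2 fun.set_map image_subsetI rangeI subset_antisym top_greatest)

context quantum_wreath begin

lemma anti_hom_square_iota_Hw:
  assumes phi: "extends_star \<phi>" and b: "b \<in> T" and w: "w permutes {1..d}"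
  shows "\<phi> (\<phi> (iota b * Hw H d w)) = iota (star (star b)) * Hw H d w"
proof -
  have anti: "anti_hom_W smul \<phi>" and phi_iota: "\<And>b. b \<in> T \<Longrightarrow> \<phi> (iota b) = iota (star b)"
    and phi_H: "\<And>i. i \<in> {1..<d} \<Longrightarrow> \<phi> (H i) = H i" using phi by (simp_all add: extends_star_def)
  have prod_H: "\<phi> (prod_list (map H u)) = prod_list (map H (rev u))" if "set u \<subseteq> {1..<d}" for u
  proof -
    have m: "map \<phi> (map H u) = map H u" using that phi_H by (induction u) auto
    show ?thesis using anti_hom_W_prod_list[OF anti, of "map H u"] unfolding m by (simp add: rev_map)
  qed
  have u: "set (red_expr d w) \<subseteq> {1..<d}" using red_expr_props[OF w] by blast
  then show ?thesis
    by (simp add: Hw_red_expr anti_hom_W_mult[OF anti] prod_H phi_iota b tens_space_star)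
qed

lemma additive_eq_on_pbw_basis:
  assumes add: "\<And>x y. \<psi>\<^sub>1 (x + y) = \<psi>\<^sub>1 x + \<psi>\<^sub>1 y" "\<And>x y. \<psi>\<^sub>2 (x + y) = \<psi>\<^sub>2 x + \<psi>\<^sub>2 y"
    and smul: "\<And>c x. \<psi>\<^sub>1 (smul c x) = smul c (\<psi>\<^sub>1 x)" "\<And>c x. \<psi>\<^sub>2 (smul c x) = smul c (\<psi>\<^sub>2 x)"
    and basis: "\<And>a w. length a = d \<Longrightarrow> w permutes {1..d} \<Longrightarrow>
      \<psi>\<^sub>1 (iota (ebasis a) * Hw H d w) = \<psi>\<^sub>2 (iota (ebasis a) * Hw H d w)"
  shows "\<psi>\<^sub>1 z = \<psi>\<^sub>2 z"
proof -
  let ?K = "Poly_Mapping.keys (pbw_coords z)" and ?c = "Poly_Mapping.lookup (pbw_coords z)"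
  have expand: "\<psi> z = (\<Sum>p\<in>?K. smul (?c p) (\<psi> (iota (ebasis (fst p)) * Hw H d (snd p))))"
    if "\<And>x y. \<psi> (x + y) = \<psi> x + \<psi> y" "\<And>c x. \<psi> (smul c x) = smul c (\<psi> x)" for \<psi>
  proof -
    have "\<psi> 0 = 0" using that(1)[of 0 0] by simp
    then have sum: "\<psi> (sum f A) = (\<Sum>x\<in>A. \<psi> (f x))" for f :: "'x \<Rightarrow> 'w" and A
      using sum_comp_morphism[of \<psi> f A] that(1) by simp
    show ?thesis using arg_cong[OF pbw_expansion[of z], of \<psi>] by (simp add: sum that(2))
  qed
  show ?thesis
    unfolding expand[OF add(1) smul(1)] expand[OF add(2) smul(2)]
  proof (rule sum.cong[OF refl])
    fix p assume "p \<in> ?K"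
    then have "length (fst p) = d" "snd p permutes {1..d}" using pbw_coords_index by auto
    then show "smul (?c p) (\<psi>\<^sub>1 (iota (ebasis (fst p)) * Hw H d (snd p))) =
        smul (?c p) (\<psi>\<^sub>2 (iota (ebasis (fst p)) * Hw H d (snd p)))" by (simp add: basis)
  qed
qed

lemma pbw_ext_klin_iota_Hw:
  assumes g: "klin g" "\<And>b. b \<in> T \<Longrightarrow> g b \<in> T" and b: "b \<in> T" and w: "w permutes {1..d}"
  shows "pbw_ext (\<lambda>p. iota (g (ebasis (fst p))) * Hw H d (snd p)) (iota b * Hw H d w) = iota (g b) * Hw H d w"
  by (simp add: pbw_ext_iota_Hw[OF b w] iota_klin_expand[OF g(1) _ b] g(2) tens_space_ebasis
      sum_distrib_right smul_mult_l)

lemma bij_of_pbw_basis_action: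
  assumes add: "\<And>x y. \<psi> (x + y) = \<psi> x + \<psi> y" and smul: "\<And>c x. \<psi> (smul c x) = smul c (\<psi> x)"
    and basis: "\<And>b w. b \<in> T \<Longrightarrow> w permutes {1..d} \<Longrightarrow> \<psi> (iota b * Hw H d w) = iota (f b) * Hw H d w"
    and f: "\<And>b. b \<in> T \<Longrightarrow> f b \<in> T"
    and g: "klin g" "\<And>b. b \<in> T \<Longrightarrow> g b \<in> T" and fg: "\<And>b. f (g b) = b" and gf: "\<And>b. g (f b) = b"
  shows "bij \<psi>"
proof -
  define \<theta> where "\<theta> = pbw_ext (\<lambda>p. iota (g (ebasis (fst p))) * Hw H d (snd p))"
  have \<theta>_basis: "\<theta> (iota b * Hw H d w) = iota (g b) * Hw H d w" if "b \<in> T" "w permutes {1..d}" for b w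
    unfolding \<theta>_def using pbw_ext_klin_iota_Hw[OF g that] .
  have \<theta>_add: "\<theta> (x + y) = \<theta> x + \<theta> y" and \<theta>_smul: "\<theta> (smul c x) = smul c (\<theta> x)" for x y c
    unfolding \<theta>_def by (simp_all add: pbw_ext_add pbw_ext_smul)
  have "\<theta> (\<psi> z) = z" for z
    by (rule additive_eq_on_pbw_basis[where \<psi>\<^sub>2 = id, simplified])
      (simp_all add: add smul \<theta>_add \<theta>_smul basis \<theta>_basis f gf tens_space_ebasis)
  moreover have "\<psi> (\<theta> z) = z" for z
    by (rule additive_eq_on_pbw_basis[where \<psi>\<^sub>2 = id, simplified])
      (simp_all add: add smul \<theta>_add \<theta>_smul basis \<theta>_basis g fg tens_space_ebasis)
  ultimately show ?thesis by (intro o_bij[of \<theta>]) (simp_all add: fun_eq_iff)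
qed

text \<open>\<open>\<phi> \<circ> \<phi>\<close> acts on the PBW basis by \<open>b H\<^sub>w \<mapsto> b\<^sup>*\<^sup>* H\<^sub>w\<close>, and \<open>**\<close> is invertible on \<open>B\<^sup>\<otimes>\<^sup>d\<close>.\<close>

lemma anti_hom_bij:
  assumes phi: "extends_star \<phi>"
  shows "bij \<phi>"
proof -
  have ks: "klin starB" and bs: "bij starB" using star_B by (simp_all add: anti_automorphism_B_def)
  define U where "U = starT (inv starB)"
  have kU: "klin U" unfolding U_def by (rule klin_starT)
  have star_U: "star (U x) = x" for x
    using bs by (simp add: U_def starT_comp[OF ks] bij_is_surj surj_f_inv_f starT_id)
  have U_star: "U (star x) = x" for x
    using bs by (simp add: U_def starT_comp[OF klin_inv[OF ks bs]] bij_is_inj inv_f_f starT_id)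
  have anti: "anti_hom_W smul \<phi>" using phi by (simp add: extends_star_def)
  have "bij (\<phi> \<circ> \<phi>)"
  proof (rule bij_of_pbw_basis_action[where f = "\<lambda>b. star (star b)" and g = "\<lambda>b. U (U b)"])
    show "klin (\<lambda>b. U (U b))" by (rule klin_comp[OF kU kU])
    show "U (U b) \<in> T" if "b \<in> T" for b using that by (simp add: U_def tens_space_starT)
  qed (simp_all add: anti_hom_W_add[OF anti] anti_hom_W_smul[OF anti] anti_hom_square_iota_Hw[OF phi]
      tens_space_star star_U U_star)
  then show ?thesis by (rule bij_if_bij_comp_self)
qed

end

theorem theorem7p4:
  fixes mulB :: "('j \<Rightarrow>\<^sub>0 'k::comm_ring_1) \<Rightarrow> ('j \<Rightarrow>\<^sub>0 'k) \<Rightarrow> ('j \<Rightarrow>\<^sub>0 'k)"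
    and oneB :: "'j \<Rightarrow>\<^sub>0 'k"
    and starB :: "('j \<Rightarrow>\<^sub>0 'k) \<Rightarrow> ('j \<Rightarrow>\<^sub>0 'k)"
    and S R :: "'j list \<Rightarrow>\<^sub>0 'k"
    and \<sigma> \<rho> :: "('j list \<Rightarrow>\<^sub>0 'k) \<Rightarrow> ('j list \<Rightarrow>\<^sub>0 'k)"
    and smul :: "'k \<Rightarrow> 'w::ring_1 \<Rightarrow> 'w"
    and iota :: "('j list \<Rightarrow>\<^sub>0 'k) \<Rightarrow> 'w"
    and H :: "nat \<Rightarrow> 'w"
    and d :: nat
  assumes d2: "2 \<le> d"
    and B_alg: "K_algebra_B mulB oneB"
    and star_B: "anti_automorphism_B mulB oneB starB"
    and S_in: "S \<in> tens_space 2" and R_in: "R \<in> tens_space 2"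
    and sigma_lin: "lin_on (tens_space 2) \<sigma>" and sigma_into: "\<sigma> ` tens_space 2 \<subseteq> tens_space 2"
    and rho_lin: "lin_on (tens_space 2) \<rho>" and rho_into: "\<rho> ` tens_space 2 \<subseteq> tens_space 2"
    and rels: "qwp_relations smul iota H d mulB oneB S R \<sigma> \<rho>"
    and PBW: "has_PBW_basis smul iota H d"
  shows "((\<exists>\<phi>. anti_hom_W smul \<phi> \<and>
             (\<forall>b\<in>tens_space d. \<phi> (iota b) = iota (starT starB b)) \<and>
             (\<forall>i\<in>{1..<d}. \<phi> (H i) = H i))
          \<longleftrightarrow>
          ((\<sigma> (starT starB S) = S \<and> \<rho> (starT starB S) + starT starB R = R) \<and>
           (\<forall>b\<in>tens_space 2. \<sigma> (starT starB (\<sigma> b)) = starT starB b \<and>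
                               \<rho> (starT starB (\<sigma> b)) + starT starB (\<rho> b) = 0)))
       \<and> ((\<exists>\<phi>. anti_hom_W smul \<phi> \<and>
             (\<forall>b\<in>tens_space d. \<phi> (iota b) = iota (starT starB b)) \<and>
             (\<forall>i\<in>{1..<d}. \<phi> (H i) = H i))
          \<longrightarrow> (\<exists>\<phi>. anti_hom_W smul \<phi> \<and>
             (\<forall>b\<in>tens_space d. \<phi> (iota b) = iota (starT starB b)) \<and>
             (\<forall>i\<in>{1..<d}. \<phi> (H i) = H i) \<and> bij \<phi>))"
proof -
  interpret quantum_wreath mulB oneB starB S R \<sigma> \<rho> smul iota H d
    by (rule quantum_wreath.intro) (rule assms)+
  show ?thesis
    using extends_star_iff_conditions anti_hom_bij unfolding extends_star_def star_conditions_def by blast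
qed

end
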